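(* Let $q$ be a prime power, $n\ge 4$, $D=2q^2-2$, $I_1=\{0,\dots,q^2-2\}$, $I_2=\{q^2-1,\dots,2q^2-3\}$, and let $s=|\Phi(n-2,q)|$. Let $t=0$ if $q$ is even and $t=\frac{q+1}{2}$ if $q$ is odd. All congruences below are modulo $q^2-1$ unless stated otherwise. The intersection numbers $p_{ij}^h$ of $\mathcal X(GU(n,q),\Phi(n,q))$ are: (1) $i,j\in I_1$: $p_{ij}^h=1$ if $h\in I_1$ and $h\equiv i+j$, and $p_{ij}^h=0$ otherwise. (2) $i\in I_1$, $j\in I_2$: $p_{ij}^h=1$ if $h\in I_2$ and $h+i\equiv j$, and $0$ otherwise. (3) $i\in I_1$, $j=D$: $p_{ij}^h=1$ if $h=D$, and $0$ otherwise. (4) $i\in I_2$, $j\in I_1$: $p_{ij}^h=1$ if $h\in I_2$ and $h\equiv i+jq$, and $0$ otherwise. (5) $i,j\in I_2$: for $h\in I_1$, $p_{ij}^h=q^{2n-3}$ if $q(h+i)\equiv j$ and $0$ otherwise; for $h\in I_2$, $p_{ij}^h=s+1$ if $i+j\equiv h+t\pmod{q+1}$ and $p_{ij}^h=q^{2n-5}+(-q)^{n-3}$ otherwise; for $h=D$, $p_{ij}^h=q^{2n-5}$. (6) $i\in I_2$, $j=D$: $p_{ij}^h=0$ for $h\in I_1$, $p_{ij}^h=s$ for $h\in I_2$, $p_{ij}^D=q^{2n-5}$. (7) $i=D$, $j\in I_1$: $p_{ij}^h=1$ if $h=D$ and $0$ otherwise. (8) $i=D$, $j\in I_2$: $p_{ij}^h=0$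 for $h\in I_1$, $s$ for $h\in I_2$, and $q^{2n-5}$ for $h=D$. (9) $i=j=D$: $p_{DD}^h=q^2 s$ for $h\in I_1$, $p_{DD}^h=s$ for $h\in I_2$, and $p_{DD}^D=(q^2-1)^2+q^4|\Phi(n-4,q)|$ (with $|\Phi(0,q)|=0$).
   Context: For $m\ge0$, $\Phi(m,q)=\{x\in\mathbb{F}_{q^2}^m\setminus\{0\}:\langle x,x\rangle=0\}$ where $\langle x,y\rangle=\sum_k x_k y_k^{\,q}$ (so $\Phi(0,q)=\emptyset$). Let $\Phi=\Phi(n,q)$ and fix a primitive element $\alpha$ of $\mathbb{F}_{q^2}$. The relations of $\mathcal X(GU(n,q),\Phi(n,q))$ (orbitals of $GU(n,q)$ acting on $\Phi$ by $x\mapsto xU$) are indexed by $l\in\{0,\dots,D\}$: $\mathcal R_l=\{(x,y)\in\Phi\times\Phi:y=\alpha^lx\}$ for $0\le l\le q^2-2$; $\mathcal R_l=\{(x,y)\in\Phi\times\Phi:\langle x,y\rangle=\alpha^l\}$ for $q^2-1\le l\le 2q^2-3$; $\mathcal R_D=\{(x,y)\in\Phi\times\Phi:\langle x,y\rangle=0,\ y\notin\mathrm{Span}\{x\}\}$. The intersection number $p_{ij}^h$ is $|\{z\in\Phi:(x,z)\in\mathcal R_i,(z,y)\in\mathcal R_j\}|$ for any $(x,y)\in\mathcal R_h$. *)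

theory Defs
  imports "HOL-Number_Theory.Number_Theory" "HOL-Library.Cardinality"
begin

text \<open>The field F_{q^2} is a finite field type 'a with CARD('a) = q^2.
  Vectors of F_{q^2}^m are represented as functions nat => 'a vanishing at indices >= m.\<close>

definition herm :: "nat \<Rightarrow> nat \<Rightarrow> (nat \<Rightarrow> 'a::field) \<Rightarrow> (nat \<Rightarrow> 'a) \<Rightarrow> 'a" where
  "herm q m x y = (\<Sum>k<m. x k * (y k) ^ q)"

definition vecs :: "nat \<Rightarrow> (nat \<Rightarrow> 'a::zero) set" where
  "vecs m = {x. \<forall>k\<ge>m. x k = 0}"

definition Phi :: "nat \<Rightarrow> nat \<Rightarrow> (nat \<Rightarrow> 'a::{field,finite}) set" where
  "Phi q m = {x \<in> vecs m. x \<noteq> (\<lambda>_. 0) \<and> herm q m x x = 0}"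

definition primitive_elem :: "'a::{field,finite} \<Rightarrow> bool" where
  "primitive_elem \<alpha> \<longleftrightarrow> \<alpha> \<noteq> 0 \<and> (\<forall>y. y \<noteq> 0 \<longrightarrow> (\<exists>l::nat. y = \<alpha> ^ l))"

definition smult_vec :: "'a::times \<Rightarrow> (nat \<Rightarrow> 'a) \<Rightarrow> (nat \<Rightarrow> 'a)" where
  "smult_vec c x = (\<lambda>k. c * x k)"

definition Rel :: "nat \<Rightarrow> 'a::{field,finite} \<Rightarrow> nat \<Rightarrow> nat \<Rightarrow> (nat \<Rightarrow> 'a) \<Rightarrow> (nat \<Rightarrow> 'a) \<Rightarrow> bool" where
  "Rel q \<alpha> n l x y \<longleftrightarrow> x \<in> Phi q n \<and> y \<in> Phi q n \<and>
     (if l \<le> q^2 - 2 then y = smult_vec (\<alpha> ^ l) x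
      else if l \<le> 2*q^2 - 3 then herm q n x y = \<alpha> ^ l
      else if l = 2*q^2 - 2 then herm q n x y = 0 \<and> \<not> (\<exists>c. y = smult_vec c x)
      else False)"

definition pcount :: "nat \<Rightarrow> 'a::{field,finite} \<Rightarrow> nat \<Rightarrow> nat \<Rightarrow> nat \<Rightarrow> (nat \<Rightarrow> 'a) \<Rightarrow> (nat \<Rightarrow> 'a) \<Rightarrow> nat" where
  "pcount q \<alpha> n i j x y = card {z \<in> Phi q n. Rel q \<alpha> n i x z \<and> Rel q \<alpha> n j z y}"

end

theory Submission
  imports Defs "HOL-Computational_Algebra.Polynomial" "HOL-Library.FuncSet"
    "HOL-Library.Function_Algebras"
begin

text \<open>Every count reduces to counting isotropic vectors with prescribed pairings, and these are
  computed by splitting off hyperbolic planes. If \<open>u, v\<close> are isotropic with \<open>\<langle>u, v\<rangle> = 1\<close>,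
  every \<open>z\<close> is uniquely \<open>a u + b v + w\<close> with \<open>w\<close> orthogonal to \<open>u\<close> and \<open>v\<close>, and
  \<open>\<langle>z, z\<rangle> = tr (a b\<^sup>q) + \<langle>w, w\<rangle>\<close>. As the trace onto the subfield of order \<open>q\<close> is
  \<open>q\<close>-to-one, this gives the number of vectors of each norm in dimension \<open>m\<close> by recursion on
  \<open>m\<close>, and it reduces the number of isotropic \<open>z\<close> with \<open>\<langle>x, z\<rangle>\<close> and \<open>\<langle>z, y\<rangle>\<close> prescribed
  to such a count in dimension \<open>n - 2\<close> (if \<open>\<langle>x, y\<rangle> \<noteq> 0\<close>, then \<open>x\<close> and a multiple of \<open>y\<close>
  form a hyperbolic pair) or \<open>n - 4\<close> (if \<open>x, y\<close> are orthogonal and independent, \<open>x\<close> and the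
  component of \<open>y\<close> orthogonal to a hyperbolic pair through \<open>x\<close> lie in two orthogonal
  hyperbolic pairs). The intersection numbers are these counts, corrected for the
  scalar multiples of \<open>x\<close> and \<open>y\<close> that \<open>R\<^sub>D\<close> excludes; the shift \<open>t\<close> enters through
  \<open>-1 = \<alpha> ^ (t (q - 1))\<close>, which decides when \<open>tr (\<alpha> ^ a)\<close> vanishes.\<close>

lemma card_roots_power_plus_linear_le:
  fixes c d :: "'a::field"
  assumes "k \<ge> 2"
  shows "card {x. x ^ k + c * x = d} \<le> k"
proof -
  define p where "p = monom (1::'a) k + [:-d, c:]"
  have "degree [:-d, c:] < k"
    using assms by (auto intro: le_less_trans[OF degree_pCons_le])
  then have deg: "degree p = k"
    unfolding p_def by (subst degree_add_eq_left) (auto simp: degree_monom_eq)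
  then have "p \<noteq> 0" using assms by auto
  have "{x. x ^ k + c * x = d} = {x. poly p x = 0}"
    by (auto simp: p_def poly_monom algebra_simps)
  then show ?thesis using card_poly_roots_bound[OF \<open>p \<noteq> 0\<close>] deg by simp
qed

lemma field_power_card_eq:
  fixes x :: "'a::{field,finite}"
  shows "x ^ CARD('a) = x"
proof (cases "x = 0")
  case False
  let ?U = "UNIV - {0::'a}"
  have "bij_betw ((*) x) ?U ?U"
    using False by (intro bij_betwI[of _ _ _ "\<lambda>y. y / x"]) auto
  then have "(\<Prod>y\<in>?U. x * y) = (\<Prod>y\<in>?U. y)"
    by (rule prod.reindex_bij_betw)
  then have "x ^ card ?U * \<Prod>?U = 1 * \<Prod>?U"
    by (simp add: prod.distrib)
  then have "x ^ card ?U = 1"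
    by (subst (asm) mult_cancel_right) auto
  moreover have "CARD('a) = Suc (card ?U)"
    using card_Suc_Diff1[of UNIV "0::'a"] by simp
  ultimately show ?thesis by (simp only: power_Suc mult_1_right)
qed (simp add: finite_UNIV_card_ge_0)

lemma card_eq_sum_card_fibers:
  assumes "f ` A \<subseteq> B" "finite A" "finite B"
  shows "card A = (\<Sum>b\<in>B. card {a\<in>A. f a = b})"
proof -
  have "A = (\<Union>b\<in>B. {a\<in>A. f a = b})" using assms(1) by auto
  also have "card \<dots> = (\<Sum>b\<in>B. card {a\<in>A. f a = b})"
    by (rule card_UN_disjoint) (use assms in auto)
  finally show ?thesis .
qed

lemma card_filter_times_eq_sum:
  assumes "finite A" "finite B"
  shows "card {p \<in> A \<times> B. P (fst p) (snd p)} = (\<Sum>a\<in>A. card {b\<in>B. P a b})"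
proof -
  let ?S = "{p \<in> A \<times> B. P (fst p) (snd p)}"
  have "card ?S = (\<Sum>a\<in>A. card {p \<in> ?S. fst p = a})"
    by (rule card_eq_sum_card_fibers) (use assms in auto)
  also have "\<dots> = (\<Sum>a\<in>A. card {b\<in>B. P a b})"
  proof (rule sum.cong[OF refl])
    fix a assume "a \<in> A"
    then have "{p \<in> ?S. fst p = a} = Pair a ` {b\<in>B. P a b}"
      by force
    then show "card {p \<in> ?S. fst p = a} = card {b\<in>B. P a b}"
      by (simp add: card_image inj_on_def)
  qed
  finally show ?thesis .
qed

lemma card_filter_bij_betw:
  assumes "bij_betw f A B"
  shows "card {b\<in>B. P b} = card {a\<in>A. P (f a)}"
proof -
  have "bij_betw f {a\<in>A. P (f a)} {b\<in>B. P b}"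
    using assms unfolding bij_betw_def inj_on_def by auto
  then show ?thesis by (simp add: bij_betw_same_card)
qed

lemma eq_bound_if_sum_attains:
  fixes f :: "'b \<Rightarrow> nat"
  assumes "finite B" "\<And>b. b \<in> B \<Longrightarrow> f b \<le> k" "card B * k \<le> sum f B" "b \<in> B"
  shows "f b = k"
proof (rule ccontr)
  assume "f b \<noteq> k"
  with assms have "sum f B < sum (\<lambda>_. k) B"
    by (intro sum_strict_mono_ex1) (auto simp: le_less)
  with assms(3) show False by simp
qed

lemma card_Diff_add_card: "finite A \<Longrightarrow> B \<subseteq> A \<Longrightarrow> card (A - B) + card B = card A"
  by (metis card_Diff_subset card_mono finite_subset le_add_diff_inverse2)

lemma sum_if_const:
  "finite A \<Longrightarrow> (\<Sum>x\<in>A. if P x then k else 0) = k * card {x\<in>A. P x}" for k :: nat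
  by (simp add: sum.inter_filter[symmetric] mult.commute)

definition unit_vec :: "nat \<Rightarrow> nat \<Rightarrow> 'a::{zero,one}" where
  "unit_vec j = (\<lambda>k. if k = j then 1 else 0)"

definition vec_subspace :: "nat \<Rightarrow> (nat \<Rightarrow> 'a::field) set \<Rightarrow> bool" where
  "vec_subspace m W \<longleftrightarrow> W \<subseteq> vecs m \<and> 0 \<in> W \<and> (\<forall>x\<in>W. \<forall>y\<in>W. x + y \<in> W)
     \<and> (\<forall>c. \<forall>x\<in>W. smult_vec c x \<in> W)"

lemma smult_vec_smult_vec [simp]:
  "smult_vec a (smult_vec b x) = smult_vec (a * b) (x :: nat \<Rightarrow> 'a::field)"
  by (simp add: smult_vec_def mult.assoc)

lemma smult_vec_1 [simp]: "smult_vec 1 x = (x :: nat \<Rightarrow> 'a::field)"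
  by (simp add: smult_vec_def)

lemma smult_vec_eq_0_iff: "smult_vec c x = 0 \<longleftrightarrow> c = 0 \<or> x = (0 :: nat \<Rightarrow> 'a::field)"
  by (auto simp: smult_vec_def fun_eq_iff)

lemma smult_vec_cancel:
  "x \<noteq> 0 \<Longrightarrow> smult_vec a x = smult_vec b x \<longleftrightarrow> a = (b :: 'a::field)"
  by (auto simp: smult_vec_def fun_eq_iff)

lemma smult_vec_eq_iff_inverse:
  "c \<noteq> 0 \<Longrightarrow> y = smult_vec c z \<longleftrightarrow> z = smult_vec (1 / c) (y :: nat \<Rightarrow> 'a::field)"
  by (auto simp: smult_vec_def fun_eq_iff)

lemma vecs_add: "x \<in> vecs m \<Longrightarrow> y \<in> vecs m \<Longrightarrow> x + y \<in> vecs m" for x :: "nat \<Rightarrow> 'a::field"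
  by (simp add: vecs_def)

lemma vecs_diff: "x \<in> vecs m \<Longrightarrow> y \<in> vecs m \<Longrightarrow> x - y \<in> vecs m" for x :: "nat \<Rightarrow> 'a::field"
  by (simp add: vecs_def)

lemma vecs_smult: "x \<in> vecs m \<Longrightarrow> smult_vec c x \<in> vecs m" for x :: "nat \<Rightarrow> 'a::field"
  by (simp add: vecs_def smult_vec_def)

lemma zero_in_vecs [simp]: "(0 :: nat \<Rightarrow> 'a::zero) \<in> vecs m"
  by (simp add: vecs_def)

lemma unit_vec_in_vecs: "k < m \<Longrightarrow> (unit_vec k :: nat \<Rightarrow> 'a::field) \<in> vecs m"
  by (simp add: vecs_def unit_vec_def)

lemma vecs_eq_last_two_zero:
  "(vecs k :: (nat \<Rightarrow> 'a::zero) set) = {w \<in> vecs (k + 2). w k = 0 \<and> w (k + 1) = 0}"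
proof -
  have "j = k \<or> j = k + 1 \<or> j \<ge> k + 2" if "j \<ge> k" for j using that by linarith
  then show ?thesis unfolding vecs_def by fastforce
qed

lemma bij_betw_vecs_PiE: "bij_betw (\<lambda>x. restrict x {..<m}) (vecs m) (PiE {..<m} (\<lambda>_. UNIV))"
  by (rule bij_betw_byWitness[where f' = "\<lambda>f k. if k < m then f k else 0"])
     (auto simp: vecs_def fun_eq_iff PiE_def extensional_def)

lemma finite_vecs: "finite (vecs m :: (nat \<Rightarrow> 'a::{zero,finite}) set)"
  using bij_betw_finite[OF bij_betw_vecs_PiE[where 'a='a, of m]] by (simp add: finite_PiE)

lemma card_vecs: "card (vecs m :: (nat \<Rightarrow> 'a::{zero,finite}) set) = CARD('a) ^ m"
  using bij_betw_same_card[OF bij_betw_vecs_PiE[where 'a='a, of m]] by (simp add: card_PiE)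

lemma vec_subspace_vecs: "vec_subspace m (vecs m)"
  by (auto simp: vec_subspace_def vecs_add vecs_smult)

lemma vec_subspace_diff: "vec_subspace m W \<Longrightarrow> x \<in> W \<Longrightarrow> y \<in> W \<Longrightarrow> x - y \<in> W"
  unfolding vec_subspace_def
  by (metis (no_types, lifting) diff_conv_add_uminus smult_vec_def mult_minus1 uminus_apply ext)

lemma vec_subspace_finite: "vec_subspace m (W :: (nat \<Rightarrow> 'a::{field,finite}) set) \<Longrightarrow> finite W"
  using finite_vecs[of m] by (meson finite_subset vec_subspace_def)

lemma Phi_iff: "x \<in> Phi q m \<longleftrightarrow> x \<in> vecs m \<and> x \<noteq> 0 \<and> herm q m x x = 0"
  by (simp add: Phi_def zero_fun_def)

lemma finite_Phi: "finite (Phi q m :: (nat \<Rightarrow> 'a::{field,finite}) set)"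
  using finite_vecs[of m] by (rule finite_subset[rotated]) (auto simp: Phi_iff)

definition nonzero_multiples :: "(nat \<Rightarrow> 'a::field) \<Rightarrow> (nat \<Rightarrow> 'a) set" where
  "nonzero_multiples x = (\<lambda>c. smult_vec c x) ` (UNIV - {0})"

lemma card_nonzero_multiples:
  "x \<noteq> 0 \<Longrightarrow> card (nonzero_multiples x) = CARD('a) - 1" for x :: "nat \<Rightarrow> 'a::{field,finite}"
  unfolding nonzero_multiples_def
  by (subst card_image) (auto simp: inj_on_def smult_vec_cancel card_Diff_singleton)

lemma in_nonzero_multiples_iff:
  "z \<noteq> 0 \<Longrightarrow> z \<in> nonzero_multiples x \<longleftrightarrow> (\<exists>c. z = smult_vec c x)"
  by (auto simp: nonzero_multiples_def smult_vec_eq_0_iff)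

lemma nonzero_multiples_smult_vec:
  fixes x :: "nat \<Rightarrow> 'a::field"
  assumes "a \<noteq> 0"
  shows "nonzero_multiples (smult_vec a x) = nonzero_multiples x"
proof -
  have "(\<lambda>c. c * a) ` (UNIV - {0}) = UNIV - {0}"
  proof
    show "UNIV - {0} \<subseteq> (\<lambda>c. c * a) ` (UNIV - {0})"
    proof
      fix d :: 'a assume "d \<in> UNIV - {0}"
      then show "d \<in> (\<lambda>c. c * a) ` (UNIV - {0})"
        using assms by (intro image_eqI[of _ _ "d / a"]) auto
    qed
  qed (use assms in auto)
  moreover have "nonzero_multiples (smult_vec a x) = (\<lambda>c. smult_vec c x) ` ((\<lambda>c. c * a) ` (UNIV - {0}))"
    unfolding nonzero_multiples_def by (simp add: image_image)
  ultimately show ?thesis by (simp add: nonzero_multiples_def)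
qed

lemma ex_multiple_commute:
  fixes y z :: "nat \<Rightarrow> 'a::field"
  assumes "y \<noteq> 0" "z \<noteq> 0"
  shows "(\<exists>c. y = smult_vec c z) \<longleftrightarrow> (\<exists>c. z = smult_vec c y)"
  using assms by (metis smult_vec_eq_0_iff smult_vec_eq_iff_inverse)

lemma ex_multiple_smult_left:
  fixes w x :: "nat \<Rightarrow> 'a::field"
  assumes "a \<noteq> 0"
  shows "(\<exists>c. smult_vec a w = smult_vec c x) \<longleftrightarrow> (\<exists>c. w = smult_vec c x)"
proof
  assume "\<exists>c. smult_vec a w = smult_vec c x"
  then obtain c where "smult_vec a w = smult_vec c x" ..
  then have "smult_vec (1 / a) (smult_vec a w) = smult_vec (1 / a) (smult_vec c x)" by simp
  then have "w = smult_vec (c / a) x" using assms by simp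
  then show "\<exists>c. w = smult_vec c x" ..
qed auto

lemma ex_multiple_smult_right:
  fixes y x :: "nat \<Rightarrow> 'a::field"
  assumes "a \<noteq> 0"
  shows "(\<exists>c. y = smult_vec c (smult_vec a x)) \<longleftrightarrow> (\<exists>c. y = smult_vec c x)"
proof
  assume "\<exists>c. y = smult_vec c x"
  then obtain c where "y = smult_vec c x" ..
  then have "y = smult_vec (c / a) (smult_vec a x)" using assms by simp
  then show "\<exists>c. y = smult_vec c (smult_vec a x)" ..
qed auto

section \<open>The field of order \<open>q\<^sup>2\<close> over its subfield of order \<open>q\<close>\<close>

text \<open>The parameter \<open>field_type\<close> only serves to fix the type of the field in the locale.\<close>

locale unitary_field =
  fixes q :: nat and field_type :: "'a::{field,finite} itself"
  assumes primepow_q: "primepow q" and card_field: "CARD('a) = q^2"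
begin

definition frob :: "'a \<Rightarrow> 'a" where "frob x = x ^ q"
definition Fq :: "'a set" where "Fq = {x. frob x = x}"
definition tr :: "'a \<Rightarrow> 'a" where "tr x = x + frob x"
definition nrm :: "'a \<Rightarrow> 'a" where "nrm x = x * frob x"

lemma q_ge_2: "q \<ge> 2"
  using primepow_gt_Suc_0[OF primepow_q] by simp

lemma q_pos: "q > 0" using q_ge_2 by simp

lemma q_square_ge_4: "q^2 \<ge> 4"
  using power_mono[OF q_ge_2, of 2] by simp

lemma prime_CHAR: "prime CHAR('a)"
  using prime_CHAR_semidom[where 'a='a] finite_imp_CHAR_pos[where 'a='a] by auto

lemma q_power_of_CHAR: "\<exists>k. q = CHAR('a) ^ k"
proof -
  obtain p k where pk: "prime p" "q = p ^ k" using primepow_q primepow_def by blast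
  have "CHAR('a) dvd p ^ (2 * k)"
    using CHAR_dvd_CARD[where 'a='a] card_field pk by (simp add: power_mult mult.commute)
  then have "CHAR('a) dvd p" using prime_CHAR prime_dvd_power by blast
  then have "CHAR('a) = p" using prime_CHAR pk primes_dvd_imp_eq by blast
  then show ?thesis using pk by auto
qed

lemma frob_add: "frob (x + y) = frob x + frob y"
  using freshmans_dream'[OF prime_CHAR] q_power_of_CHAR unfolding frob_def by blast

lemma frob_sum: "frob (sum f A) = (\<Sum>i\<in>A. frob (f i))"
  using freshmans_dream_sum'[OF prime_CHAR] q_power_of_CHAR unfolding frob_def by blast

lemma frob_mult: "frob (x * y) = frob x * frob y"
  by (simp add: frob_def power_mult_distrib)

lemma frob_frob [simp]: "frob (frob x) = x"
  using field_power_card_eq[of x] card_field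
  by (simp add: frob_def power2_eq_square power_mult[symmetric])

lemma frob_eq_iff [simp]: "frob x = frob y \<longleftrightarrow> x = y"
  by (metis frob_frob)

lemma frob_0 [simp]: "frob 0 = 0" and frob_1 [simp]: "frob 1 = 1"
  using q_pos by (simp_all add: frob_def)

lemma frob_eq_0_iff [simp]: "frob x = 0 \<longleftrightarrow> x = 0"
  using frob_eq_iff[of x 0] by simp

lemma frob_minus: "frob (- x) = - frob x"
  using frob_add[of x "- x"] by (simp add: add_eq_0_iff)

lemma frob_diff: "frob (x - y) = frob x - frob y"
  using frob_add[of x "- y"] by (simp add: frob_minus)

lemma frob_divide: "frob (x / y) = frob x / frob y"
  by (simp add: frob_def power_divide)

lemma frob_power: "frob (x ^ k) = x ^ (k * q)"
  by (simp add: frob_def power_mult)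

lemma tr_0 [simp]: "tr 0 = 0" by (simp add: tr_def)
lemma tr_in_Fq: "tr x \<in> Fq" by (simp add: Fq_def tr_def frob_add add.commute)
lemma nrm_in_Fq: "nrm x \<in> Fq" by (simp add: Fq_def nrm_def frob_mult mult.commute)
lemma nrm_eq_0_iff: "nrm x = 0 \<longleftrightarrow> x = 0" by (simp add: nrm_def)
lemma zero_in_Fq [simp]: "0 \<in> Fq" and one_in_Fq [simp]: "1 \<in> Fq" by (simp_all add: Fq_def)
lemma minus_in_Fq: "d \<in> Fq \<Longrightarrow> - d \<in> Fq" by (simp add: Fq_def frob_minus)
lemma diff_in_Fq: "c \<in> Fq \<Longrightarrow> d \<in> Fq \<Longrightarrow> c - d \<in> Fq" by (simp add: Fq_def frob_diff)

text \<open>The subfield \<open>Fq\<close>, the fibres of the trace and the non-zero fibres of the norm are sets of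
  roots of polynomials of degree \<open>q\<close>, \<open>q\<close> and \<open>q + 1\<close>; since these fibres partition the field,
  all the bounds are attained.\<close>

lemma card_Fq_le: "card Fq \<le> q"
proof -
  have "Fq = {x. x ^ q + (- 1) * x = 0}" by (auto simp: Fq_def frob_def)
  then show ?thesis using card_roots_power_plus_linear_le[OF q_ge_2, of "- 1" 0] by (simp only:)
qed

lemma card_tr_fiber_le: "card {x. tr x = d} \<le> q"
proof -
  have "{x. tr x = d} = {x. x ^ q + 1 * x = d}" by (auto simp: tr_def frob_def algebra_simps)
  then show ?thesis using card_roots_power_plus_linear_le[OF q_ge_2, of 1 d] by (simp only:)
qed

lemma card_nrm_fiber_le: "card {x. nrm x = d} \<le> q + 1"
proof -
  have "{x. nrm x = d} = {x. x ^ (q + 1) + 0 * x = d}" by (auto simp: nrm_def frob_def algebra_simps)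
  moreover have "q + 1 \<ge> 2" using q_ge_2 by simp
  ultimately show ?thesis using card_roots_power_plus_linear_le[of "q + 1" 0 d] by (simp only:)
qed

lemma card_eq_sum_tr_fibers: "q^2 = (\<Sum>d\<in>Fq. card {x. tr x = d})"
  using card_eq_sum_card_fibers[of tr UNIV Fq] tr_in_Fq card_field by auto

lemma card_Fq: "card Fq = q"
proof -
  have "q * q \<le> card Fq * q"
    using card_eq_sum_tr_fibers sum_bounded_above[of Fq "\<lambda>d. card {x. tr x = d}" q] card_tr_fiber_le
    by (simp add: power2_eq_square)
  then show ?thesis using card_Fq_le q_pos by simp
qed

lemma card_tr_fiber: "d \<in> Fq \<Longrightarrow> card {x. tr x = d} = q"
  using eq_bound_if_sum_attains[of Fq "\<lambda>d. card {x. tr x = d}" q d] card_tr_fiber_le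
    card_eq_sum_tr_fibers card_Fq by (simp add: power2_eq_square)

lemma card_nrm_fiber:
  assumes "d \<in> Fq" "d \<noteq> 0"
  shows "card {x. nrm x = d} = q + 1"
proof -
  have fiber: "{x \<in> UNIV - {0}. nrm x = e} = {x. nrm x = e}" if "e \<noteq> 0" for e
    using that nrm_eq_0_iff by auto
  have "q^2 - 1 = card (UNIV - {0::'a})" using card_field by (simp add: card_Diff_singleton)
  also have "\<dots> = (\<Sum>e\<in>Fq - {0}. card {x \<in> UNIV - {0}. nrm x = e})"
    using nrm_in_Fq nrm_eq_0_iff by (intro card_eq_sum_card_fibers) auto
  also have "\<dots> = (\<Sum>e\<in>Fq - {0}. card {x. nrm x = e})"
    using fiber by (intro sum.cong) auto
  finally have "card (Fq - {0}) * (q + 1) \<le> (\<Sum>e\<in>Fq - {0}. card {x. nrm x = e})"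
    using card_Fq by (simp add: power2_eq_square algebra_simps)
  then show ?thesis
    using eq_bound_if_sum_attains[of "Fq - {0}" "\<lambda>e. card {x. nrm x = e}" "q + 1" d]
      card_nrm_fiber_le assms by simp
qed

lemma tr_eq_0_iff:
  assumes "x \<noteq> 0"
  shows "tr x = 0 \<longleftrightarrow> x ^ (q - 1) = - 1"
proof -
  have "tr x = x * (1 + x ^ (q - 1))"
    using q_pos by (simp add: tr_def frob_def distrib_left flip: power_Suc)
  then show ?thesis using assms by (simp add: add_eq_0_iff)
qed

lemma tr_surj:
  assumes "d \<in> Fq" shows "\<exists>x. tr x = d"
proof -
  have "{x. tr x = d} \<noteq> {}" using card_tr_fiber[OF assms] q_pos by (metis card.empty less_irrefl)
  then show ?thesis by blast
qed

lemma nrm_surj: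
  assumes "d \<in> Fq" "d \<noteq> 0" shows "\<exists>x. nrm x = d"
proof -
  have "{x. nrm x = d} \<noteq> {}" using card_nrm_fiber[OF assms] by (metis card.empty add_is_0 one_neq_zero)
  then show ?thesis by blast
qed

lemma card_tr_linear:
  assumes "d \<in> Fq"
  shows "card {b. tr (a * frob b) = d} = (if a = 0 then if d = 0 then q^2 else 0 else q)"
proof (cases "a = 0")
  case False
  have "bij (\<lambda>b. a * frob b)"
    using False by (intro bij_betwI[of _ _ _ "\<lambda>y. frob (y / a)"]) (auto simp: frob_divide)
  then have "card {y \<in> UNIV. tr y = d} = card {b \<in> UNIV. tr (a * frob b) = d}"
    by (rule card_filter_bij_betw)
  then show ?thesis using card_tr_fiber[OF assms] False by simp
qed (use card_field in \<open>simp add: tr_def\<close>)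

lemma card_tr_pairs:
  assumes "d \<in> Fq"
  shows "card {p. tr (fst p * frob (snd p)) = d} = (if d = 0 then q^2 else 0) + (q^2 - 1) * q"
proof -
  have "card {p. tr (fst p * frob (snd p)) = d} = (\<Sum>a\<in>UNIV. card {b. tr (a * frob b) = d})"
    using card_filter_times_eq_sum[of UNIV UNIV "\<lambda>a b. tr (a * frob b) = d"] by simp
  also have "\<dots> = card {b. tr (0 * frob b) = d} + (\<Sum>a\<in>UNIV - {0}. card {b. tr (a * frob b) = d})"
    by (simp add: sum.remove[of UNIV 0])
  also have "\<dots> = (if d = 0 then q^2 else 0) + (q^2 - 1) * q"
    using card_tr_linear[OF assms] card_field by (simp add: card_Diff_singleton)
  finally show ?thesis .
qed

lemma herm_conv: "herm q m x y = (\<Sum>k<m. x k * frob (y k))" for x y :: "nat \<Rightarrow> 'a"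
  by (simp add: herm_def frob_def)

lemma herm_add_left: "herm q m (x + y) z = herm q m x z + herm q m y z"
  for x y z :: "nat \<Rightarrow> 'a"
  by (simp add: herm_conv sum.distrib distrib_right)

lemma herm_add_right: "herm q m z (x + y) = herm q m z x + herm q m z y"
  for x y z :: "nat \<Rightarrow> 'a"
  by (simp add: herm_conv sum.distrib distrib_left frob_add)

lemma herm_diff_left: "herm q m (x - y) z = herm q m x z - herm q m y z"
  for x y z :: "nat \<Rightarrow> 'a"
  by (simp add: herm_conv sum_subtractf left_diff_distrib)

lemma herm_diff_right: "herm q m z (x - y) = herm q m z x - herm q m z y"
  for x y z :: "nat \<Rightarrow> 'a"
  by (simp add: herm_conv sum_subtractf right_diff_distrib frob_diff)

lemma herm_smult_left: "herm q m (smult_vec c x) z = c * herm q m x z"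
  for x z :: "nat \<Rightarrow> 'a"
  by (simp add: herm_conv smult_vec_def sum_distrib_left mult.assoc)

lemma herm_smult_right: "herm q m z (smult_vec c x) = frob c * herm q m z x"
  for x z :: "nat \<Rightarrow> 'a"
  by (simp add: herm_conv smult_vec_def sum_distrib_left frob_mult mult.left_commute)

lemma herm_commute: "herm q m y x = frob (herm q m x y)" for x y :: "nat \<Rightarrow> 'a"
  by (simp add: herm_conv frob_sum frob_mult mult.commute)

lemma herm_zero_left [simp]: "herm q m 0 x = 0"
  and herm_zero_right [simp]: "herm q m x 0 = 0" for x :: "nat \<Rightarrow> 'a"
  by (simp_all add: herm_conv)

lemma herm_eq_0_commute: "herm q m y x = 0 \<longleftrightarrow> herm q m x y = 0" for x y :: "nat \<Rightarrow> 'a"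
  by (simp add: herm_commute[of m y x])

lemma herm_eq_iff_frob: "herm q m x y = c \<longleftrightarrow> herm q m y x = frob c" for x y :: "nat \<Rightarrow> 'a"
  using herm_commute[of m y x] by auto

lemma herm_self_in_Fq: "herm q m x x \<in> Fq" for x :: "nat \<Rightarrow> 'a"
  using herm_commute[of m x x] by (simp add: Fq_def)

lemma herm_unit_vec_left:
  fixes x :: "nat \<Rightarrow> 'a"
  assumes "k < m"
  shows "herm q m (unit_vec k) x = frob (x k)"
proof -
  have "herm q m (unit_vec k) x = (\<Sum>j<m. if j = k then frob (x j) else 0)"
    unfolding herm_conv by (rule sum.cong) (auto simp: unit_vec_def)
  with assms show ?thesis by simp
qed

lemma herm_unit_vec_right: "k < m \<Longrightarrow> herm q m x (unit_vec k) = x k" for x :: "nat \<Rightarrow> 'a"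
  by (simp add: herm_commute[of m x] herm_unit_vec_left)

lemma herm_vecs_restrict:
  fixes x y :: "nat \<Rightarrow> 'a"
  assumes "x \<in> vecs k" "k \<le> m"
  shows "herm q m x y = herm q k x y"
proof -
  have "{..<m} = {..<k} \<union> {k..<m}" "{..<k} \<inter> {k..<m} = {}" using assms(2) by auto
  moreover have "(\<Sum>j\<in>{k..<m}. x j * frob (y j)) = 0"
    using assms(1) by (intro sum.neutral) (auto simp: vecs_def)
  ultimately show ?thesis by (simp add: herm_conv sum.union_disjoint)
qed

lemma exists_unit_vec_herm_nonzero:
  fixes y :: "nat \<Rightarrow> 'a"
  assumes "y \<in> vecs m" "y \<noteq> 0"
  shows "\<exists>k<m. herm q m (unit_vec k) y \<noteq> 0"
proof -
  obtain k where k: "y k \<noteq> 0" using assms(2) by (auto simp: fun_eq_iff)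
  then have "k < m" using assms(1) by (auto simp: vecs_def not_less[symmetric])
  with k show ?thesis by (auto simp: herm_unit_vec_left)
qed

lemma exists_hyperbolic_partner:
  fixes x z :: "nat \<Rightarrow> 'a"
  assumes W: "vec_subspace m W" and "x \<in> W" "z \<in> W"
    and x_iso: "herm q m x x = 0" and zx: "herm q m z x \<noteq> 0"
  shows "\<exists>u\<in>W. herm q m u u = 0 \<and> herm q m u x = 1 \<and>
           (\<forall>y. herm q m z y = 0 \<longrightarrow> herm q m x y = 0 \<longrightarrow> herm q m u y = 0)"
proof -
  define u0 where "u0 = smult_vec (1 / herm q m z x) z"
  have u0x: "herm q m u0 x = 1" using zx by (simp add: u0_def herm_smult_left)
  then have xu0: "herm q m x u0 = 1" using herm_commute[of m x u0] by simp
  obtain \<delta> where \<delta>: "tr \<delta> = - herm q m u0 u0"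
    using tr_surj minus_in_Fq herm_self_in_Fq by blast
  \<comment> \<open>Adding \<open>\<delta> x\<close> changes the norm by \<open>tr \<delta>\<close> and keeps the pairing with \<open>x\<close>.\<close>
  define u where "u = u0 + smult_vec \<delta> x"
  have "u \<in> W" using W assms(2,3) by (simp add: u_def u0_def vec_subspace_def)
  moreover have "herm q m u u = herm q m u0 u0 + tr \<delta>"
    by (simp add: u_def herm_add_left herm_add_right herm_smult_left herm_smult_right
        u0x xu0 x_iso tr_def algebra_simps)
  moreover have "herm q m u x = 1" using u0x x_iso by (simp add: u_def herm_add_left herm_smult_left)
  moreover have "herm q m u y = 0" if "herm q m z y = 0" "herm q m x y = 0" for y
    using that by (simp add: u_def u0_def herm_add_left herm_smult_left)
  ultimately show ?thesis using \<delta> by auto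
qed

lemma card_herm_fiber:
  fixes y w0 :: "nat \<Rightarrow> 'a"
  assumes W: "vec_subspace m W" and "w0 \<in> W" "herm q m w0 y \<noteq> 0"
  shows "q^2 * card {w\<in>W. herm q m w y = e} = card W"
proof -
  define w1 where "w1 = smult_vec (1 / herm q m w0 y) w0"
  have w1: "w1 \<in> W" "herm q m w1 y = 1"
    using W assms(2,3) by (simp_all add: w1_def vec_subspace_def herm_smult_left)
  define N where "N = card {w\<in>W. herm q m w y = 0}"
  have fiber: "card {w\<in>W. herm q m w y = d} = N" for d
  proof -
    have "bij_betw (\<lambda>w. w + smult_vec d w1) {w\<in>W. herm q m w y = 0} {w\<in>W. herm q m w y = d}"
      by (rule bij_betw_byWitness[where f' = "\<lambda>w. w - smult_vec d w1"])
         (use W w1 in \<open>auto simp: vec_subspace_def vec_subspace_diff herm_add_left herm_diff_left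
            herm_smult_left\<close>)
    then show ?thesis by (simp add: bij_betw_same_card N_def)
  qed
  have "card W = (\<Sum>d\<in>UNIV. card {w\<in>W. herm q m w y = d})"
    using vec_subspace_finite[OF W] by (intro card_eq_sum_card_fibers) auto
  then show ?thesis using fiber card_field by simp
qed

end

section \<open>Hyperbolic pairs\<close>

locale hyperbolic_pair = unitary_field q field_type for q and field_type :: "'a::{field,finite} itself" +
  fixes m :: nat and W :: "(nat \<Rightarrow> 'a) set" and u v :: "nat \<Rightarrow> 'a"
  assumes subspace: "vec_subspace m W" and u_in: "u \<in> W" and v_in: "v \<in> W"
    and u_iso: "herm q m u u = 0" and v_iso: "herm q m v v = 0" and uv: "herm q m u v = 1"
begin

definition perp :: "(nat \<Rightarrow> 'a) set" where
  "perp = {w\<in>W. herm q m w u = 0 \<and> herm q m w v = 0}"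

definition hyp_sum :: "(nat \<Rightarrow> 'a) \<Rightarrow> 'a \<Rightarrow> 'a \<Rightarrow> nat \<Rightarrow> 'a" where
  "hyp_sum w a b = smult_vec a u + smult_vec b v + w"

lemma herm_v_u: "herm q m v u = 1"
  using herm_commute[of m v u] uv by simp

lemma perp_subset: "perp \<subseteq> W"
  by (auto simp: perp_def)

lemma zero_in_perp: "0 \<in> perp"
  using subspace by (simp add: perp_def vec_subspace_def)

lemma herm_u_perp: "w \<in> perp \<Longrightarrow> herm q m u w = 0"
  and herm_v_perp: "w \<in> perp \<Longrightarrow> herm q m v w = 0"
  by (simp_all add: perp_def herm_eq_0_commute)

lemma herm_hyp_sum_left: "w \<in> perp \<Longrightarrow> w' \<in> perp \<Longrightarrow> herm q m (hyp_sum w a b) w' = herm q m w w'"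
  by (simp add: hyp_sum_def herm_add_left herm_smult_left herm_u_perp herm_v_perp)

lemma herm_hyp_sum_v: "w \<in> perp \<Longrightarrow> herm q m (hyp_sum w a b) v = a"
  by (simp add: hyp_sum_def herm_add_left herm_smult_left uv v_iso perp_def)

lemma herm_hyp_sum_u: "w \<in> perp \<Longrightarrow> herm q m (hyp_sum w a b) u = b"
  by (simp add: hyp_sum_def herm_add_left herm_smult_left herm_v_u u_iso perp_def)

lemma herm_hyp_sum_self:
  assumes "w \<in> perp"
  shows "herm q m (hyp_sum w a b) (hyp_sum w a b) = tr (a * frob b) + herm q m w w"
  using assms
  by (simp add: hyp_sum_def herm_add_left herm_add_right herm_smult_left herm_smult_right
      u_iso v_iso uv herm_v_u herm_u_perp herm_v_perp perp_def tr_def frob_mult algebra_simps)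

lemma vec_subspace_perp: "vec_subspace m perp"
  using subspace by (auto simp: vec_subspace_def perp_def herm_add_left herm_smult_left)

lemma finite_perp: "finite perp"
  using vec_subspace_finite[OF vec_subspace_perp] .

definition hyp_coords :: "(nat \<Rightarrow> 'a) \<Rightarrow> (nat \<Rightarrow> 'a) \<times> 'a \<times> 'a" where
  "hyp_coords z = (z - smult_vec (herm q m z v) u - smult_vec (herm q m z u) v, herm q m z v, herm q m z u)"

lemma fst_hyp_coords_in_perp: "z \<in> W \<Longrightarrow> fst (hyp_coords z) \<in> perp"
  using subspace u_in v_in
  by (auto simp: hyp_coords_def perp_def vec_subspace_def vec_subspace_diff herm_diff_left
      herm_smult_left u_iso v_iso uv herm_v_u)

lemma bij_hyp_sum: "bij_betw (\<lambda>(w, a, b). hyp_sum w a b) (perp \<times> UNIV \<times> UNIV) W"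
proof (rule bij_betw_byWitness[where f' = hyp_coords])
  show "\<forall>t\<in>perp \<times> UNIV \<times> UNIV. hyp_coords ((\<lambda>(w, a, b). hyp_sum w a b) t) = t"
  proof clarify
    fix w a b assume "w \<in> perp"
    then show "hyp_coords (hyp_sum w a b) = (w, a, b)"
      by (simp add: hyp_coords_def herm_hyp_sum_u herm_hyp_sum_v) (simp add: hyp_sum_def)
  qed
  show "\<forall>z\<in>W. (\<lambda>(w, a, b). hyp_sum w a b) (hyp_coords z) = z"
    by (simp add: hyp_sum_def hyp_coords_def)
  show "(\<lambda>(w, a, b). hyp_sum w a b) ` (perp \<times> UNIV \<times> UNIV) \<subseteq> W"
    using subspace u_in v_in perp_subset by (auto simp: hyp_sum_def vec_subspace_def)
  show "hyp_coords ` W \<subseteq> perp \<times> UNIV \<times> UNIV"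
    using fst_hyp_coords_in_perp by (auto simp: hyp_coords_def)
qed

lemma card_filter_eq_sum_perp:
  "card {z\<in>W. P z} = (\<Sum>w\<in>perp. card {(a, b). P (hyp_sum w a b)})"
proof -
  have "card {z\<in>W. P z} = card {t \<in> perp \<times> UNIV \<times> UNIV. P ((\<lambda>(w, a, b). hyp_sum w a b) t)}"
    by (rule card_filter_bij_betw[OF bij_hyp_sum])
  also have "\<dots> = (\<Sum>w\<in>perp. card {p \<in> UNIV \<times> UNIV. P (hyp_sum w (fst p) (snd p))})"
    using card_filter_times_eq_sum[OF finite_perp, of "UNIV \<times> UNIV" "\<lambda>w p. P (hyp_sum w (fst p) (snd p))"]
    by (simp add: case_prod_beta)
  finally show ?thesis by (simp add: split_def)
qed

lemma card_eq_card_perp: "card W = q^4 * card perp"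
proof -
  have "card (UNIV :: ('a \<times> 'a) set) = q^4"
    using card_cartesian_product[of "UNIV :: 'a set" "UNIV :: 'a set"] card_field
    by (simp flip: power_add)
  then show ?thesis using card_filter_eq_sum_perp[of "\<lambda>_. True"] by simp
qed

lemma card_herm_self_eq:
  assumes "c \<in> Fq"
  shows "card {z\<in>W. herm q m z z = c}
    = (q^2 - 1) * q * card perp + q^2 * card {w\<in>perp. herm q m w w = c}"
proof -
  have "card {z\<in>W. herm q m z z = c}
      = (\<Sum>w\<in>perp. card {p. tr (fst p * frob (snd p)) = c - herm q m w w})"
    unfolding card_filter_eq_sum_perp
    by (rule sum.cong[OF refl]) (auto simp: herm_hyp_sum_self eq_diff_eq intro!: arg_cong[where f = card])
  also have "\<dots> = (\<Sum>w\<in>perp. (if herm q m w w = c then q^2 else 0) + (q^2 - 1) * q)"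
    using card_tr_pairs diff_in_Fq[OF assms herm_self_in_Fq] by (intro sum.cong) auto
  finally show ?thesis
    using finite_perp by (simp add: sum.distrib sum_if_const)
qed

lemma card_isotropic_herm_v_perp:
  assumes "y \<in> perp"
  shows "card {z\<in>W. herm q m z z = 0 \<and> herm q m z v = a \<and> herm q m z y = e}
    = (if a = 0 then q^2 * card {w\<in>perp. herm q m w w = 0 \<and> herm q m w y = e}
       else q * card {w\<in>perp. herm q m w y = e})"
proof -
  have fiber: "card {(a', b'). herm q m (hyp_sum w a' b') (hyp_sum w a' b') = 0 \<and>
      herm q m (hyp_sum w a' b') v = a \<and> herm q m (hyp_sum w a' b') y = e}
    = (if a = 0 then if herm q m w w = 0 \<and> herm q m w y = e then q^2 else 0
       else if herm q m w y = e then q else 0)" if "w \<in> perp" for w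
  proof -
    have "{(a', b'). herm q m (hyp_sum w a' b') (hyp_sum w a' b') = 0 \<and>
        herm q m (hyp_sum w a' b') v = a \<and> herm q m (hyp_sum w a' b') y = e}
      = (if herm q m w y = e then Pair a ` {b. tr (a * frob b) = - herm q m w w} else {})"
      using that assms
      by (auto simp: herm_hyp_sum_self herm_hyp_sum_v herm_hyp_sum_left add_eq_0_iff2)
    then show ?thesis
      using card_tr_linear[OF minus_in_Fq[OF herm_self_in_Fq], of a m w] card_field
      by (simp add: card_image inj_on_def)
  qed
  have "card {z\<in>W. herm q m z z = 0 \<and> herm q m z v = a \<and> herm q m z y = e}
    = (\<Sum>w\<in>perp. if a = 0 then if herm q m w w = 0 \<and> herm q m w y = e then q^2 else 0
       else if herm q m w y = e then q else 0)"
    unfolding card_filter_eq_sum_perp by (rule sum.cong[OF refl]) (rule fiber)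
  then show ?thesis
    using finite_perp by (cases "a = 0") (simp_all add: sum_if_const)
qed

lemma card_isotropic_herm_v_u:
  "card {z\<in>W. herm q m z z = 0 \<and> herm q m z v = a \<and> herm q m z u = b}
    = card {w\<in>perp. herm q m w w = - tr (a * frob b)}"
proof -
  have fiber: "card {(a', b'). herm q m (hyp_sum w a' b') (hyp_sum w a' b') = 0 \<and>
      herm q m (hyp_sum w a' b') v = a \<and> herm q m (hyp_sum w a' b') u = b}
    = (if herm q m w w = - tr (a * frob b) then 1 else 0)" if "w \<in> perp" for w
  proof -
    have "{(a', b'). herm q m (hyp_sum w a' b') (hyp_sum w a' b') = 0 \<and>
        herm q m (hyp_sum w a' b') v = a \<and> herm q m (hyp_sum w a' b') u = b}
      = (if herm q m w w = - tr (a * frob b) then {(a, b)} else {})"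
      using that by (auto simp: herm_hyp_sum_self herm_hyp_sum_v herm_hyp_sum_u add_eq_0_iff2)
    then show ?thesis by simp
  qed
  show ?thesis
    unfolding card_filter_eq_sum_perp using finite_perp
    by (simp add: fiber sum_if_const cong: sum.cong)
qed

end

section \<open>Number of vectors of given norm\<close>

context unitary_field
begin

definition norm_count :: "nat \<Rightarrow> 'a \<Rightarrow> nat" where
  "norm_count k c = card {z \<in> vecs k. herm q k z z = c}"

text \<open>\<open>same_norm_counts n W k\<close> replaces ``\<open>W\<close> with the form \<open>herm q n\<close> is isometric to
  \<open>\<bbbF>\<^sup>k\<close>'': nothing else about the orthogonal complements below is needed.\<close>

definition same_norm_counts :: "nat \<Rightarrow> (nat \<Rightarrow> 'a) set \<Rightarrow> nat \<Rightarrow> bool" where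
  "same_norm_counts n W k \<longleftrightarrow> card W = q^(2*k) \<and> (\<forall>c. card {z\<in>W. herm q n z z = c} = norm_count k c)"

lemma same_norm_counts_vecs: "same_norm_counts k (vecs k) k"
  by (simp add: same_norm_counts_def norm_count_def card_vecs card_field power_mult)

lemma norm_count_notin_Fq:
  assumes "c \<notin> Fq" shows "norm_count k c = 0"
proof -
  have "{z \<in> vecs k. herm q k z z = c} = {}" using assms herm_self_in_Fq[of k] by blast
  then show ?thesis unfolding norm_count_def by (metis card.empty)
qed

lemma norm_count_0_eq: "norm_count k 0 = card (Phi q k :: (nat \<Rightarrow> 'a) set) + 1"
proof -
  have "{z \<in> vecs k. herm q k z z = (0::'a)} = insert 0 (Phi q k)" by (auto simp: Phi_iff)
  moreover have "(0 :: nat \<Rightarrow> 'a) \<notin> Phi q k" by (simp add: Phi_iff)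
  ultimately show ?thesis by (simp add: norm_count_def finite_Phi)
qed

lemma norm_count_zero_dim: "d \<noteq> 0 \<Longrightarrow> norm_count 0 d = 0"
proof -
  have "vecs 0 = {0 :: nat \<Rightarrow> 'a}" by (auto simp: vecs_def fun_eq_iff)
  then show "d \<noteq> 0 \<Longrightarrow> norm_count 0 d = 0" by (simp add: norm_count_def herm_def)
qed

lemma norm_count_one_dim:
  assumes "d \<in> Fq" "d \<noteq> 0"
  shows "norm_count 1 d = q + 1"
proof -
  have "bij_betw (\<lambda>a k. if k = 0 then a else 0) UNIV (vecs 1 :: (nat \<Rightarrow> 'a) set)"
    by (rule bij_betw_byWitness[where f' = "\<lambda>z. z 0"]) (auto simp: vecs_def fun_eq_iff)
  then have "norm_count 1 d = card {a. nrm a = d}"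
    unfolding norm_count_def by (subst card_filter_bij_betw) (auto simp: herm_conv nrm_def)
  then show ?thesis using card_nrm_fiber[OF assms] by simp
qed

lemma exists_hyperbolic_pair_vecs:
  "\<exists>u v. hyperbolic_pair q (k + 2) (vecs (k + 2)) u v \<and>
     hyperbolic_pair.perp q (k + 2) (vecs (k + 2)) u v = (vecs k :: (nat \<Rightarrow> 'a) set)"
proof -
  let ?e = "unit_vec :: nat \<Rightarrow> nat \<Rightarrow> 'a"
  obtain \<beta> where \<beta>: "nrm \<beta> = - 1" using nrm_surj[of "- 1"] minus_in_Fq by fastforce
  obtain \<delta> where \<delta>: "tr \<delta> = - 1" using tr_surj[of "- 1"] minus_in_Fq by fastforce
  define u where "u = ?e k + smult_vec \<beta> (?e (k + 1))"
  define v where "v = ?e k + smult_vec \<delta> u"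
  have herm_u: "herm q (k + 2) w u = w k + frob \<beta> * w (k + 1)" for w
    by (simp add: u_def herm_add_right herm_smult_right herm_unit_vec_right)
  have herm_v: "herm q (k + 2) w v = w k + frob \<delta> * herm q (k + 2) w u" for w
    by (simp add: v_def herm_add_right herm_smult_right herm_unit_vec_right)
  have in_vecs: "u \<in> vecs (k + 2)" "v \<in> vecs (k + 2)"
    by (simp_all add: u_def v_def vecs_add vecs_smult unit_vec_in_vecs)
  have "u k = 1" "u (k + 1) = \<beta>" by (simp_all add: u_def unit_vec_def smult_vec_def)
  then have u_iso: "herm q (k + 2) u u = 0"
    using \<beta> herm_u[of u] by (simp add: nrm_def mult.commute)
  have ee: "herm q (k + 2) (?e k) (?e k) = 1"
    by (simp add: herm_unit_vec_right) (simp add: unit_vec_def)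
  have ue: "herm q (k + 2) u (?e k) = 1"
    using \<open>u k = 1\<close> by (simp add: herm_unit_vec_right)
  then have eu: "herm q (k + 2) (?e k) u = 1"
    using herm_commute[of "k + 2" "?e k" u] by simp
  have "herm q (k + 2) v v = 1 + tr \<delta>" "herm q (k + 2) u v = 1"
    using ee ue eu u_iso
    by (simp_all add: v_def herm_add_left herm_add_right herm_smult_left herm_smult_right tr_def)
  then interpret hyperbolic_pair q field_type "k + 2" "vecs (k + 2)" u v
    using \<delta> u_iso in_vecs by unfold_locales (simp_all add: vec_subspace_vecs)
  have "\<beta> \<noteq> 0" using \<beta> by (auto simp: nrm_def)
  then have "herm q (k + 2) w u = 0 \<and> herm q (k + 2) w v = 0 \<longleftrightarrow> w k = 0 \<and> w (k + 1) = 0" for w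
    using herm_u[of w] herm_v[of w] by auto
  then have "perp = vecs k"
    unfolding perp_def vecs_eq_last_two_zero[of k] by auto
  then show ?thesis using hyperbolic_pair_axioms by blast
qed

lemma norm_count_add_2:
  assumes "c \<in> Fq"
  shows "norm_count (k + 2) c = (q^2 - 1) * q * q^(2*k) + q^2 * norm_count k c"
proof -
  obtain u v :: "nat \<Rightarrow> 'a" where H: "hyperbolic_pair q (k + 2) (vecs (k + 2)) u v"
    and perp: "hyperbolic_pair.perp q (k + 2) (vecs (k + 2)) u v = vecs k"
    using exists_hyperbolic_pair_vecs by blast
  interpret hyperbolic_pair q field_type "k + 2" "vecs (k + 2)" u v by (rule H)
  have "{w \<in> vecs k. herm q (k + 2) w w = c} = {w \<in> vecs k. herm q k w w = c}"
    using herm_vecs_restrict[of _ k "k + 2"] by auto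
  then show ?thesis
    using card_herm_self_eq[OF assms] perp
    by (simp add: norm_count_def card_vecs card_field power_mult)
qed

lemma norm_count_nonzero:
  assumes "d \<in> Fq" "d \<noteq> 0"
  shows "int (norm_count (k + 1) d) = int q ^ (2 * k + 1) + (- int q) ^ k"
proof (induction k rule: nat_induct2)
  case 0
  then show ?case using norm_count_one_dim[OF assms] by simp
next
  case 1
  have "int (norm_count (0 + 2) d) = (int q^2 - 1) * int q"
    using norm_count_add_2[OF assms(1), of 0] norm_count_zero_dim[OF assms(2)] q_pos
    by (simp add: of_nat_diff)
  then show ?case by (simp add: algebra_simps power2_eq_square power3_eq_cube)
next
  case (step k)
  have "int (norm_count (k + 1 + 2) d)
      = (int q^2 - 1) * int q * int q^(2 * (k + 1)) + int q^2 * int (norm_count (k + 1) d)"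
    using norm_count_add_2[OF assms(1), of "k + 1"] q_pos by (simp add: of_nat_diff)
  also have "\<dots> = int q ^ (2 * (k + 2) + 1) + (- int q) ^ (k + 2)"
    unfolding step.IH by (simp add: algebra_simps power_add power2_eq_square)
  finally show ?case by simp
qed

definition nondegenerate :: "nat \<Rightarrow> (nat \<Rightarrow> 'a) set \<Rightarrow> bool" where
  "nondegenerate m W \<longleftrightarrow> (\<forall>y\<in>W. y \<noteq> 0 \<longrightarrow> (\<exists>w\<in>W. herm q m w y \<noteq> 0))"

lemma nondegenerate_vecs: "nondegenerate m (vecs m)"
  unfolding nondegenerate_def using exists_unit_vec_herm_nonzero unit_vec_in_vecs by blast

lemma exists_hyperbolic_pair:
  assumes "vec_subspace m W" "nondegenerate m W" "x \<in> W" "x \<noteq> 0" "herm q m x x = 0"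
  shows "\<exists>u. hyperbolic_pair q m W u x"
proof -
  obtain z where "z \<in> W" "herm q m z x \<noteq> 0"
    using assms(2-4) by (auto simp: nondegenerate_def)
  then obtain u where "u \<in> W" "herm q m u u = 0" "herm q m u x = 1"
    using exists_hyperbolic_partner[OF assms(1,3) _ assms(5)] by blast
  then have "hyperbolic_pair q m W u x"
    using assms by unfold_locales auto
  then show ?thesis by blast
qed

lemma card_Phi_filter:
  "card {z \<in> Phi q n. P z} = card {z \<in> vecs n. herm q n z z = 0 \<and> P z} - (if P (0 :: nat \<Rightarrow> 'a) then 1 else 0)"
proof -
  have "{z \<in> Phi q n. P z} = {z \<in> vecs n. herm q n z z = 0 \<and> P z} - {0}"
    by (auto simp: Phi_iff)
  then show ?thesis using finite_vecs[of n, where 'a = 'a] by (simp add: card_Diff_singleton_if)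
qed

end

context hyperbolic_pair
begin

lemma same_norm_counts_perp:
  assumes "same_norm_counts m W (k + 2)"
  shows "same_norm_counts m perp k"
proof -
  have "2 * (k + 2) = 4 + 2 * k" by simp
  then have "q^(2 * (k + 2)) = q^4 * q^(2*k)" by (simp only: power_add)
  then have "q^4 * card perp = q^4 * q^(2*k)"
    using assms card_eq_card_perp by (simp add: same_norm_counts_def)
  then have card_perp: "card perp = q^(2*k)" using q_pos by simp
  have "card {w\<in>perp. herm q m w w = c} = norm_count k c" for c
  proof (cases "c \<in> Fq")
    case True
    have "q^2 * card {w\<in>perp. herm q m w w = c} + (q^2 - 1) * q * card perp
        = card {z\<in>W. herm q m z z = c}"
      using card_herm_self_eq[OF True] by simp
    also have "\<dots> = norm_count (k + 2) c"
      using assms by (simp add: same_norm_counts_def)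
    also have "\<dots> = q^2 * norm_count k c + (q^2 - 1) * q * card perp"
      using norm_count_add_2[OF True] card_perp by simp
    finally have "q^2 * card {w\<in>perp. herm q m w w = c} = q^2 * norm_count k c"
      by simp
    then show ?thesis using q_pos by simp
  next
    case False
    then have "{w\<in>perp. herm q m w w = c} = {}" using herm_self_in_Fq[of m] by blast
    then show ?thesis using norm_count_notin_Fq[OF False] by (metis card.empty)
  qed
  with card_perp show ?thesis by (simp add: same_norm_counts_def)
qed

lemma nondegenerate_perp:
  assumes "nondegenerate m W"
  shows "nondegenerate m perp"
  unfolding nondegenerate_def
proof (intro ballI impI)
  fix y assume y: "y \<in> perp" "y \<noteq> 0"
  then obtain z where z: "z \<in> W" "herm q m z y \<noteq> 0"
    using assms perp_subset by (auto simp: nondegenerate_def)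
  let ?w = "fst (hyp_coords z)"
  have "?w \<in> perp" using fst_hyp_coords_in_perp[OF z(1)] .
  moreover have "herm q m ?w y = herm q m z y"
    using y(1) by (simp add: hyp_coords_def herm_diff_left herm_smult_left herm_u_perp herm_v_perp)
  ultimately show "\<exists>w\<in>perp. herm q m w y \<noteq> 0" using z(2) by metis
qed

lemma card_isotropic_herm_v:
  assumes "same_norm_counts m W (k + 2)"
  shows "card {z\<in>W. herm q m z z = 0 \<and> herm q m z v = a}
    = (if a = 0 then q^2 * norm_count k 0 else q^(2*k+1))"
  using card_isotropic_herm_v_perp[OF zero_in_perp, of a 0] same_norm_counts_perp[OF assms]
  by (simp add: same_norm_counts_def)

lemma card_isotropic_herm_v_u_norm_count:
  assumes "same_norm_counts m W (k + 2)"
  shows "card {z\<in>W. herm q m z z = 0 \<and> herm q m z v = a \<and> herm q m z u = b}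
    = norm_count k (- tr (a * frob b))"
  using card_isotropic_herm_v_u same_norm_counts_perp[OF assms] by (simp add: same_norm_counts_def)

lemma card_isotropic_herm_v_isotropic:
  assumes W: "same_norm_counts m W (k + 4)" "nondegenerate m W"
    and y: "y \<in> perp" "y \<noteq> 0" "herm q m y y = 0"
  shows "card {z\<in>W. herm q m z z = 0 \<and> herm q m z v = a \<and> herm q m z y = e}
    = (if a = 0 \<and> e = 0 then q^4 * norm_count k 0 else q^(2*k+3))"
proof -
  have perp_counts: "same_norm_counts m perp (k + 2)"
    using same_norm_counts_perp[of "k + 2"] W(1) by (simp add: eval_nat_numeral)
  \<comment> \<open>\<open>y\<close> and a partner of it split a second hyperbolic plane off \<open>perp\<close>.\<close>
  obtain u' where "hyperbolic_pair q m perp u' y"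
    using exists_hyperbolic_pair[OF vec_subspace_perp nondegenerate_perp[OF W(2)] y] by blast
  then interpret P: hyperbolic_pair q field_type m perp u' y .
  have "card {w\<in>perp. herm q m w y = e} = q^(2*k+2)"
  proof -
    have "q^2 * card {w\<in>perp. herm q m w y = e} = q^2 * q^(2*k+2)"
      using card_herm_fiber[OF vec_subspace_perp P.u_in, of y e] P.uv perp_counts
      by (simp add: same_norm_counts_def power_add[symmetric])
    then show ?thesis using q_pos by simp
  qed
  then show ?thesis
    using card_isotropic_herm_v_perp[OF y(1), of a e] P.card_isotropic_herm_v[OF perp_counts, of e]
    by (auto simp: power_add power2_eq_square power3_eq_cube power4_eq_xxxx mult_ac)
qed

end

section \<open>Isotropic vectors with prescribed pairings\<close>

context unitary_field
begin

lemma exists_hyperbolic_pair_Phi: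
  fixes x :: "nat \<Rightarrow> 'a"
  shows "x \<in> Phi q n \<Longrightarrow> \<exists>u. hyperbolic_pair q n (vecs n) u x"
  using exists_hyperbolic_pair[OF vec_subspace_vecs nondegenerate_vecs] by (simp add: Phi_iff)

lemma card_Phi_herm:
  fixes x :: "nat \<Rightarrow> 'a"
  assumes x: "x \<in> Phi q n" and n: "n = k + 2"
  shows "card {z \<in> Phi q n. herm q n x z = \<gamma>} = (if \<gamma> = 0 then q^2 * norm_count k 0 - 1 else q^(2*k+1))"
proof -
  obtain u :: "nat \<Rightarrow> 'a" where "hyperbolic_pair q n (vecs n) u x"
    using exists_hyperbolic_pair_Phi[OF x] ..
  then interpret hyperbolic_pair q field_type n "vecs n" u x .
  have "{z \<in> vecs n. herm q n z z = 0 \<and> herm q n x z = \<gamma>}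
      = {z \<in> vecs n. herm q n z z = 0 \<and> herm q n z x = frob \<gamma>}"
    by (auto simp: herm_eq_iff_frob[of n x])
  then have "card {z \<in> Phi q n. herm q n x z = \<gamma>}
      = card {z \<in> vecs n. herm q n z z = 0 \<and> herm q n z x = frob \<gamma>} - (if \<gamma> = 0 then 1 else 0)"
    using card_Phi_filter[of n "\<lambda>z. herm q n x z = \<gamma>"] by auto
  then show ?thesis
    using card_isotropic_herm_v[of k "frob \<gamma>"] same_norm_counts_vecs[of n] n by simp
qed

lemma card_Phi_herm_herm_nonorthogonal:
  fixes x y :: "nat \<Rightarrow> 'a"
  assumes x: "x \<in> Phi q n" and y: "y \<in> Phi q n" and xy: "herm q n x y = c" "c \<noteq> 0"
    and n: "n = k + 2"
  shows "card {z \<in> Phi q n. herm q n x z = \<gamma>1 \<and> herm q n z y = \<gamma>2}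
    = norm_count k (- tr (\<gamma>1 * \<gamma>2 / c)) - (if \<gamma>1 = 0 \<and> \<gamma>2 = 0 then 1 else 0)"
proof -
  define v where "v = smult_vec (frob (1 / c)) y"
  have herm_v: "herm q n z v = herm q n z y / c" for z
    by (simp add: v_def herm_smult_right frob_divide)
  have "hyperbolic_pair q n (vecs n) x v"
    using x y xy by unfold_locales
      (simp_all add: Phi_iff v_def vecs_smult herm_smult_left herm_smult_right frob_divide vec_subspace_vecs)
  then interpret hyperbolic_pair q field_type n "vecs n" x v .
  have "{z \<in> vecs n. herm q n z z = 0 \<and> (herm q n x z = \<gamma>1 \<and> herm q n z y = \<gamma>2)}
      = {z \<in> vecs n. herm q n z z = 0 \<and> herm q n z v = \<gamma>2 / c \<and> herm q n z x = frob \<gamma>1}"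
    using xy(2) by (auto simp: herm_v herm_eq_iff_frob[of n x])
  then have "card {z \<in> Phi q n. herm q n x z = \<gamma>1 \<and> herm q n z y = \<gamma>2}
      = card {z \<in> vecs n. herm q n z z = 0 \<and> herm q n z v = \<gamma>2 / c \<and> herm q n z x = frob \<gamma>1}
        - (if \<gamma>1 = 0 \<and> \<gamma>2 = 0 then 1 else 0)"
    using card_Phi_filter[of n "\<lambda>z. herm q n x z = \<gamma>1 \<and> herm q n z y = \<gamma>2"] by auto
  then show ?thesis
    using card_isotropic_herm_v_u_norm_count[of k "\<gamma>2 / c" "frob \<gamma>1"] same_norm_counts_vecs[of n] n
    by (simp add: mult.commute)
qed

lemma card_Phi_herm_herm_orthogonal:
  fixes x y :: "nat \<Rightarrow> 'a"
  assumes x: "x \<in> Phi q n" and y: "y \<in> Phi q n" and xy: "herm q n x y = 0"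
    and indep: "\<nexists>c. y = smult_vec c x" and n: "n = k + 4"
  shows "card {z \<in> Phi q n. herm q n x z = \<gamma>1 \<and> herm q n z y = \<gamma>2}
    = (if \<gamma>1 = 0 \<and> \<gamma>2 = 0 then q^4 * norm_count k 0 - 1 else q^(2*k+3))"
proof -
  obtain u :: "nat \<Rightarrow> 'a" where "hyperbolic_pair q n (vecs n) u x"
    using exists_hyperbolic_pair_Phi[OF x] ..
  then interpret hyperbolic_pair q field_type n "vecs n" u x .
  define \<beta> where "\<beta> = herm q n y u"
  define w where "w = y - smult_vec \<beta> x"
  have y_eq: "y = w + smult_vec \<beta> x" by (simp add: w_def)
  have "herm q n x u = 1" using herm_commute[of n x u] uv by simp
  moreover have yx: "herm q n y x = 0" using xy herm_eq_0_commute by blast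
  ultimately have w_perp: "w \<in> perp"
    using x y by (simp add: perp_def w_def \<beta>_def Phi_iff vecs_diff vecs_smult herm_diff_left
        herm_smult_left)
  have "w \<noteq> 0" using indep y_eq by auto
  have "herm q n w w = 0"
    using x y xy yx by (simp add: w_def Phi_iff herm_diff_left herm_diff_right herm_smult_left
        herm_smult_right)
  have herm_y: "herm q n z y = herm q n z w + frob \<beta> * herm q n z x" for z
    by (subst y_eq) (simp add: herm_add_right herm_smult_right)
  have "{z \<in> vecs n. herm q n z z = 0 \<and> (herm q n x z = \<gamma>1 \<and> herm q n z y = \<gamma>2)}
      = {z \<in> vecs n. herm q n z z = 0 \<and> herm q n z x = frob \<gamma>1 \<and>
          herm q n z w = \<gamma>2 - frob \<beta> * frob \<gamma>1}"
    by (auto simp: herm_y herm_eq_iff_frob[of n x] eq_diff_eq)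
  then have "card {z \<in> Phi q n. herm q n x z = \<gamma>1 \<and> herm q n z y = \<gamma>2}
      = card {z \<in> vecs n. herm q n z z = 0 \<and> herm q n z x = frob \<gamma>1 \<and>
          herm q n z w = \<gamma>2 - frob \<beta> * frob \<gamma>1} - (if \<gamma>1 = 0 \<and> \<gamma>2 = 0 then 1 else 0)"
    using card_Phi_filter[of n "\<lambda>z. herm q n x z = \<gamma>1 \<and> herm q n z y = \<gamma>2"] by auto
  then show ?thesis
    using card_isotropic_herm_v_isotropic[OF _ nondegenerate_vecs w_perp \<open>w \<noteq> 0\<close> \<open>herm q n w w = 0\<close>,
        of k "frob \<gamma>1" "\<gamma>2 - frob \<beta> * frob \<gamma>1"] same_norm_counts_vecs[of n] n
    by auto
qed

lemma smult_vec_in_Phi: "x \<in> Phi q n \<Longrightarrow> c \<noteq> 0 \<Longrightarrow> smult_vec c x \<in> Phi q n"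
  for x :: "nat \<Rightarrow> 'a"
  by (simp add: Phi_iff vecs_smult smult_vec_eq_0_iff herm_smult_left herm_smult_right)

lemma nonzero_multiples_subset_Phi: "x \<in> Phi q n \<Longrightarrow> nonzero_multiples x \<subseteq> Phi q n"
  for x :: "nat \<Rightarrow> 'a"
  by (auto simp: nonzero_multiples_def intro: smult_vec_in_Phi)

lemma herm_smult_vec_self: "x \<in> Phi q n \<Longrightarrow> herm q n x (smult_vec c x) = 0"
  for x :: "nat \<Rightarrow> 'a"
  by (simp add: Phi_iff herm_smult_right)

lemma card_Phi_nonorthogonal_drop_multiple_right:
  fixes x y :: "nat \<Rightarrow> 'a"
  assumes y: "y \<in> Phi q n" and xy: "herm q n x y = c" "c \<noteq> 0" and "\<gamma> \<noteq> 0"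
  shows "card {z \<in> Phi q n. herm q n x z = \<gamma> \<and> herm q n z y = 0 \<and> (\<nexists>d. y = smult_vec d z)}
    = card {z \<in> Phi q n. herm q n x z = \<gamma> \<and> herm q n z y = 0} - 1"
proof -
  let ?S = "{z \<in> Phi q n. herm q n x z = \<gamma> \<and> herm q n z y = 0}"
  define w where "w = smult_vec (frob (\<gamma> / c)) y"
  have "w \<in> ?S"
    using smult_vec_in_Phi[OF y] xy assms(4) y by (simp add: w_def Phi_iff herm_smult_right herm_smult_left)
  moreover have "(\<exists>d. y = smult_vec d z) \<longleftrightarrow> z = w" if "z \<in> ?S" for z
  proof
    assume "\<exists>d. y = smult_vec d z"
    then obtain d where "y = smult_vec d z" ..
    moreover have "d \<noteq> 0" using y calculation by (auto simp: Phi_iff smult_vec_eq_0_iff)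
    ultimately have "z = smult_vec (1 / d) y" using smult_vec_eq_iff_inverse by blast
    moreover from this have "frob (1 / d) = \<gamma> / c"
      using that xy by (simp add: herm_smult_right field_simps)
    ultimately show "z = w" by (metis frob_frob w_def)
  next
    assume "z = w"
    then have "y = smult_vec (1 / frob (\<gamma> / c)) z" using xy(2) assms(4) by (simp add: w_def)
    then show "\<exists>d. y = smult_vec d z" ..
  qed
  ultimately have "{z \<in> Phi q n. herm q n x z = \<gamma> \<and> herm q n z y = 0 \<and> (\<nexists>d. y = smult_vec d z)} = ?S - {w}"
    by auto
  then show ?thesis using \<open>w \<in> ?S\<close> by (simp add: card_Diff_singleton)
qed

lemma card_Phi_nonorthogonal_drop_multiple_left:
  fixes x y :: "nat \<Rightarrow> 'a"
  assumes x: "x \<in> Phi q n" and xy: "herm q n x y = c" "c \<noteq> 0" and "\<gamma> \<noteq> 0"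
  shows "card {z \<in> Phi q n. herm q n x z = 0 \<and> (\<nexists>d. z = smult_vec d x) \<and> herm q n z y = \<gamma>}
    = card {z \<in> Phi q n. herm q n x z = 0 \<and> herm q n z y = \<gamma>} - 1"
proof -
  let ?S = "{z \<in> Phi q n. herm q n x z = 0 \<and> herm q n z y = \<gamma>}"
  define w where "w = smult_vec (\<gamma> / c) x"
  have "w \<in> ?S"
    using smult_vec_in_Phi[OF x] xy assms(4) x by (simp add: w_def Phi_iff herm_smult_right herm_smult_left)
  moreover have "(\<exists>d. z = smult_vec d x) \<longleftrightarrow> z = w" if "z \<in> ?S" for z
  proof
    assume "\<exists>d. z = smult_vec d x"
    then obtain d where d: "z = smult_vec d x" ..
    then have "d = \<gamma> / c" using that xy by (simp add: herm_smult_left field_simps)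
    with d show "z = w" by (simp add: w_def)
  qed (auto simp: w_def)
  ultimately have "{z \<in> Phi q n. herm q n x z = 0 \<and> (\<nexists>d. z = smult_vec d x) \<and> herm q n z y = \<gamma>} = ?S - {w}"
    by auto
  then show ?thesis using \<open>w \<in> ?S\<close> by (simp add: card_Diff_singleton)
qed

lemma card_Phi_orthogonal_drop_multiples:
  fixes x :: "nat \<Rightarrow> 'a"
  assumes x: "x \<in> Phi q n" and n: "n = k + 2"
  shows "card ({z \<in> Phi q n. herm q n x z = 0} - nonzero_multiples x) = q^2 * card (Phi q k :: (nat \<Rightarrow> 'a) set)"
proof -
  let ?A = "{z \<in> Phi q n. herm q n x z = 0}"
  have "nonzero_multiples x \<subseteq> ?A"
    using nonzero_multiples_subset_Phi[OF x] herm_smult_vec_self[OF x]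
    by (auto simp: nonzero_multiples_def)
  moreover have "finite ?A" by (rule finite_subset[OF _ finite_Phi]) auto
  moreover have "card ?A = q^2 * norm_count k 0 - 1"
    using card_Phi_herm[OF x n, of 0] by simp
  moreover have "card (nonzero_multiples x) = q^2 - 1"
    using x card_field by (simp add: Phi_iff card_nonzero_multiples)
  ultimately have "card (?A - nonzero_multiples x) + (q^2 - 1) = q^2 * norm_count k 0 - 1"
    using card_Diff_add_card[of ?A "nonzero_multiples x"] by simp
  then show ?thesis
    using q_square_ge_4 by (simp add: norm_count_0_eq distrib_left)
qed

lemma card_Phi_orthogonal_pair_drop_multiples:
  fixes x y :: "nat \<Rightarrow> 'a"
  assumes x: "x \<in> Phi q n" and y: "y \<in> Phi q n" and xy: "herm q n x y = 0"
    and indep: "\<nexists>c. y = smult_vec c x" and n: "n = k + 4"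
  shows "card ({z \<in> Phi q n. herm q n x z = 0 \<and> herm q n z y = 0} - nonzero_multiples x - nonzero_multiples y)
    + 2 * (q^2 - 1) + 1 = q^4 * (card (Phi q k :: (nat \<Rightarrow> 'a) set) + 1)"
proof -
  let ?S = "{z \<in> Phi q n. herm q n x z = 0 \<and> herm q n z y = 0}"
  let ?U = "nonzero_multiples x \<union> nonzero_multiples y"
  have fin: "finite ?S" by (rule finite_subset[OF _ finite_Phi]) auto
  have sub: "?U \<subseteq> ?S"
    using nonzero_multiples_subset_Phi[OF x] nonzero_multiples_subset_Phi[OF y] xy x y
    by (auto simp: nonzero_multiples_def herm_smult_left herm_smult_right Phi_iff herm_eq_0_commute)
  have "smult_vec c x \<noteq> smult_vec d y" if "d \<noteq> 0" for c d
    using indep ex_multiple_smult_left[OF that, of y x] by metis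
  then have "nonzero_multiples x \<inter> nonzero_multiples y = {}"
    by (auto simp: nonzero_multiples_def)
  moreover have "card (nonzero_multiples x) = q^2 - 1" "card (nonzero_multiples y) = q^2 - 1"
    using x y card_field by (simp_all add: Phi_iff card_nonzero_multiples)
  ultimately have "card ?U = 2 * (q^2 - 1)"
    using finite_subset[OF sub fin] by (simp add: card_Un_disjoint)
  moreover have "?S - nonzero_multiples x - nonzero_multiples y = ?S - ?U" by blast
  moreover have "card ?S + 1 = q^4 * norm_count k 0"
    using card_Phi_herm_herm_orthogonal[OF x y xy indep n, of 0 0] q_pos
    by (simp add: norm_count_0_eq Suc_le_eq)
  ultimately show ?thesis
    using card_Diff_add_card[OF fin sub] by (simp add: norm_count_0_eq)
qed

end

section \<open>The intersection numbers\<close>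

locale unitary_scheme = unitary_field q field_type for q and field_type :: "'a::{field,finite} itself" +
  fixes \<alpha> :: 'a
  assumes primitive: "primitive_elem \<alpha>"
begin

abbreviation M :: nat where "M \<equiv> q^2 - 1"
abbreviation t :: nat where "t \<equiv> if even q then 0 else (q + 1) div 2"
abbreviation I1 :: "nat set" where "I1 \<equiv> {0..q^2 - 2}"
abbreviation I2 :: "nat set" where "I2 \<equiv> {q^2 - 1..2*q^2 - 3}"
abbreviation D :: nat where "D \<equiv> 2*q^2 - 2"

lemma alpha_nonzero [simp]: "\<alpha> \<noteq> 0"
  using primitive by (simp add: primitive_elem_def)

lemma alpha_power_M: "\<alpha> ^ M = 1"
proof -
  have "Suc M = CARD('a)" using card_field q_square_ge_4 by simp
  then have "\<alpha> * \<alpha> ^ M = \<alpha> * 1"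
    using field_power_card_eq[of \<alpha>] by (metis power_Suc mult_1_right)
  then show ?thesis by simp
qed

lemma alpha_power_mod: "\<alpha> ^ a = \<alpha> ^ (a mod M)"
proof -
  have "\<alpha> ^ a = \<alpha> ^ (M * (a div M)) * \<alpha> ^ (a mod M)"
    by (simp flip: power_add)
  then show ?thesis by (simp only: power_mult alpha_power_M power_one mult_1)
qed

lemma inj_on_alpha_power: "inj_on (\<lambda>l. \<alpha> ^ l) {..<M}"
proof -
  have "UNIV - {0} \<subseteq> (\<lambda>l. \<alpha> ^ l) ` {..<M}"
  proof
    fix y :: 'a assume "y \<in> UNIV - {0}"
    then obtain l where "y = \<alpha> ^ l" using primitive by (auto simp: primitive_elem_def)
    then have "y = \<alpha> ^ (l mod M)" using alpha_power_mod by simp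
    moreover have "l mod M < M" using q_square_ge_4 by simp
    ultimately show "y \<in> (\<lambda>l. \<alpha> ^ l) ` {..<M}" by blast
  qed
  moreover have "card (UNIV - {0::'a}) = M" using card_field by (simp add: card_Diff_singleton)
  ultimately have "card {..<M} \<le> card ((\<lambda>l. \<alpha> ^ l) ` {..<M})"
    by (metis card_lessThan card_mono finite_imageI finite_lessThan)
  then show ?thesis
    using card_image_le[of "{..<M}" "\<lambda>l. \<alpha> ^ l"] by (simp add: eq_card_imp_inj_on)
qed

lemma alpha_power_eq_iff: "\<alpha> ^ a = \<alpha> ^ b \<longleftrightarrow> [a = b] (mod M)"
proof -
  have "\<alpha> ^ (a mod M) = \<alpha> ^ (b mod M) \<longleftrightarrow> a mod M = b mod M"
    using inj_on_alpha_power q_square_ge_4 by (auto simp: inj_on_def)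
  then show ?thesis using alpha_power_mod[of a] alpha_power_mod[of b] by (simp add: cong_def)
qed

lemma minus_one_eq_alpha_power: "- 1 = \<alpha> ^ (t * (q - 1))"
proof (cases "even q")
  case True
  obtain k where k: "q = CHAR('a) ^ k" using q_power_of_CHAR by blast
  with True q_ge_2 have "2 dvd CHAR('a)"
    by (metis prime_CHAR prime_dvd_power_iff power_0 gr0I two_is_prime_nat dvd_refl odd_one)
  then have "CHAR('a) = 2" using primes_dvd_imp_eq[OF two_is_prime_nat prime_CHAR] by simp
  then have "- (1::'a) = 1" by (rule uminus_CHAR_2)
  with True show ?thesis by simp
next
  case False
  define e where "e = (q + 1) div 2 * (q - 1)"
  have "2 * e = M"
    using False by (auto simp: e_def elim!: oddE simp: power2_eq_square algebra_simps)
  then have "(\<alpha> ^ e)^2 = 1" using alpha_power_M by (simp add: power_mult[symmetric] mult.commute)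
  moreover have "\<alpha> ^ e \<noteq> 1"
  proof
    assume "\<alpha> ^ e = 1"
    then have "[e = 0] (mod M)" using alpha_power_eq_iff[of e 0] by simp
    moreover have "0 < e" "e < M" using \<open>2 * e = M\<close> q_square_ge_4 by linarith+
    ultimately show False by (simp add: cong_def)
  qed
  ultimately show ?thesis using False by (simp add: power2_eq_1_iff e_def)
qed

lemma tr_alpha_power_div_eq_0_iff:
  "tr (\<alpha> ^ a / \<alpha> ^ b) = 0 \<longleftrightarrow> [a = b + t] (mod (q + 1))"
proof -
  have M_eq: "M = (q - 1) * (q + 1)" by (simp add: power2_eq_square algebra_simps)
  have "tr (\<alpha> ^ a / \<alpha> ^ b) = 0 \<longleftrightarrow> (\<alpha> ^ a / \<alpha> ^ b) ^ (q - 1) = - 1"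
    by (rule tr_eq_0_iff) simp
  also have "\<dots> \<longleftrightarrow> \<alpha> ^ ((q - 1) * a) = \<alpha> ^ ((q - 1) * b) * \<alpha> ^ ((q - 1) * t)"
    using minus_one_eq_alpha_power
    by (simp add: power_divide divide_eq_eq power_mult[symmetric] mult.commute)
  also have "\<dots> \<longleftrightarrow> [(q - 1) * a = (q - 1) * (b + t)] (mod (q - 1) * (q + 1))"
    by (simp only: flip: power_add distrib_left) (simp only: alpha_power_eq_iff M_eq)
  also have "\<dots> \<longleftrightarrow> (q - 1) * (a mod (q + 1)) = (q - 1) * ((b + t) mod (q + 1))"
    by (simp only: cong_def mod_mult_mult1)
  also have "\<dots> \<longleftrightarrow> [a = b + t] (mod (q + 1))"
    using q_ge_2 by (simp add: cong_def)
  finally show ?thesis .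
qed

lemma Rel_Phi: "Rel q \<alpha> n h x y \<Longrightarrow> x \<in> Phi q n \<and> y \<in> Phi q n"
  by (simp add: Rel_def)

lemma Rel_scalar_iff:
  "i \<in> I1 \<Longrightarrow> Rel q \<alpha> n i x y \<longleftrightarrow> x \<in> Phi q n \<and> y \<in> Phi q n \<and> y = smult_vec (\<alpha> ^ i) x"
  by (simp add: Rel_def)

lemma Rel_pairing_iff:
  "i \<in> I2 \<Longrightarrow> Rel q \<alpha> n i x y \<longleftrightarrow> x \<in> Phi q n \<and> y \<in> Phi q n \<and> herm q n x y = \<alpha> ^ i"
  using q_square_ge_4 by (auto simp: Rel_def)

lemma Rel_orth_iff:
  "Rel q \<alpha> n D x y \<longleftrightarrow> x \<in> Phi q n \<and> y \<in> Phi q n \<and> herm q n x y = 0 \<and> (\<nexists>c. y = smult_vec c x)"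
  using q_square_ge_4 by (auto simp: Rel_def)

lemma Rel_cases:
  assumes "Rel q \<alpha> n h x y"
  obtains (scalar) "h \<in> I1" "y = smult_vec (\<alpha> ^ h) x"
    | (pairing) "h \<in> I2" "herm q n x y = \<alpha> ^ h"
    | (orth) "h = D" "herm q n x y = 0" "\<nexists>c. y = smult_vec c x"
  using assms by (auto simp: Rel_def split: if_splits)

lemma index_classes_disjoint:
  "h \<in> I1 \<Longrightarrow> h \<notin> I2 \<and> h \<noteq> D" "h \<in> I2 \<Longrightarrow> h \<notin> I1 \<and> h \<noteq> D" "h = D \<Longrightarrow> h \<notin> I1 \<and> h \<notin> I2"
  using q_square_ge_4 by auto

lemma pcount_scalar_left:
  assumes "i \<in> I1" "x \<in> Phi q n"
  shows "pcount q \<alpha> n i j x y = (if Rel q \<alpha> n j (smult_vec (\<alpha> ^ i) x) y then 1 else 0)"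
proof -
  have "{z \<in> Phi q n. Rel q \<alpha> n i x z \<and> Rel q \<alpha> n j z y}
      = (if Rel q \<alpha> n j (smult_vec (\<alpha> ^ i) x) y then {smult_vec (\<alpha> ^ i) x} else {})"
    using assms smult_vec_in_Phi[OF assms(2)] by (auto simp: Rel_scalar_iff)
  then show ?thesis by (simp add: pcount_def)
qed

lemma pcount_scalar_right:
  assumes "j \<in> I1" "y \<in> Phi q n"
  shows "pcount q \<alpha> n i j x y = (if Rel q \<alpha> n i x (smult_vec (1 / \<alpha> ^ j) y) then 1 else 0)"
proof -
  have "{z \<in> Phi q n. Rel q \<alpha> n i x z \<and> Rel q \<alpha> n j z y}
      = (if Rel q \<alpha> n i x (smult_vec (1 / \<alpha> ^ j) y) then {smult_vec (1 / \<alpha> ^ j) y} else {})"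
  proof -
    have "y = smult_vec (\<alpha> ^ j) z \<longleftrightarrow> z = smult_vec (1 / \<alpha> ^ j) y" for z
      by (rule smult_vec_eq_iff_inverse) simp
    then show ?thesis using assms smult_vec_in_Phi[OF assms(2)] by (auto simp: Rel_scalar_iff dest: Rel_Phi)
  qed
  then show ?thesis by (simp add: pcount_def)
qed

lemma pcount_I1_I1:
  assumes R: "Rel q \<alpha> n h x y" and "i \<in> I1" "j \<in> I1"
  shows "int (pcount q \<alpha> n i j x y) = (if h \<in> I1 \<and> [h = i + j] (mod M) then 1 else 0)"
proof -
  have x: "x \<in> Phi q n" and y: "y \<in> Phi q n" using Rel_Phi[OF R] by auto
  have "pcount q \<alpha> n i j x y = (if y = smult_vec (\<alpha> ^ (i + j)) x then 1 else 0)"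
    using pcount_scalar_left[OF assms(2) x] smult_vec_in_Phi[OF x] y assms(3)
    by (simp add: Rel_scalar_iff power_add mult.commute)
  moreover have "y = smult_vec (\<alpha> ^ (i + j)) x \<longleftrightarrow> h \<in> I1 \<and> [h = i + j] (mod M)"
    using R
  proof (cases rule: Rel_cases)
    case scalar
    then show ?thesis
      using x by (simp add: Phi_iff smult_vec_cancel alpha_power_eq_iff cong_sym_eq)
  next
    case pairing
    then show ?thesis using herm_smult_vec_self[OF x] index_classes_disjoint by auto
  next
    case orth
    then show ?thesis using index_classes_disjoint by auto
  qed
  ultimately show ?thesis by simp
qed

lemma pcount_I1_I2:
  assumes R: "Rel q \<alpha> n h x y" and "i \<in> I1" "j \<in> I2"
  shows "int (pcount q \<alpha> n i j x y) = (if h \<in> I2 \<and> [h + i = j] (mod M) then 1 else 0)"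
proof -
  have x: "x \<in> Phi q n" and y: "y \<in> Phi q n" using Rel_Phi[OF R] by auto
  have "pcount q \<alpha> n i j x y = (if \<alpha> ^ i * herm q n x y = \<alpha> ^ j then 1 else 0)"
    using pcount_scalar_left[OF assms(2) x] smult_vec_in_Phi[OF x] y assms(3)
    by (simp add: Rel_pairing_iff herm_smult_left)
  moreover have "\<alpha> ^ i * herm q n x y = \<alpha> ^ j \<longleftrightarrow> h \<in> I2 \<and> [h + i = j] (mod M)"
    using R
  proof (cases rule: Rel_cases)
    case scalar
    then show ?thesis using herm_smult_vec_self[OF x] index_classes_disjoint by auto
  next
    case pairing
    then show ?thesis by (simp add: alpha_power_eq_iff add.commute flip: power_add)
  next
    case orth
    then show ?thesis using index_classes_disjoint by auto
  qed
  ultimately show ?thesis by simp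
qed

lemma pcount_I1_D:
  assumes R: "Rel q \<alpha> n h x y" and "i \<in> I1"
  shows "int (pcount q \<alpha> n i D x y) = (if h = D then 1 else 0)"
proof -
  have x: "x \<in> Phi q n" and y: "y \<in> Phi q n" using Rel_Phi[OF R] by auto
  have "pcount q \<alpha> n i D x y = (if Rel q \<alpha> n D x y then 1 else 0)"
    using pcount_scalar_left[OF assms(2) x] smult_vec_in_Phi[OF x] x y ex_multiple_smult_right[of "\<alpha> ^ i" y x]
    by (simp add: Rel_orth_iff herm_smult_left)
  with R show ?thesis
    by (cases rule: Rel_cases) (use x y in \<open>auto simp: Rel_orth_iff index_classes_disjoint\<close>)
qed

lemma pcount_I2_I1:
  assumes R: "Rel q \<alpha> n h x y" and "i \<in> I2" "j \<in> I1"
  shows "int (pcount q \<alpha> n i j x y) = (if h \<in> I2 \<and> [h = i + j * q] (mod M) then 1 else 0)"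
proof -
  have x: "x \<in> Phi q n" and y: "y \<in> Phi q n" using Rel_Phi[OF R] by auto
  have "pcount q \<alpha> n i j x y = (if herm q n x y = \<alpha> ^ i * \<alpha> ^ (j * q) then 1 else 0)"
    using pcount_scalar_right[OF assms(3) y] smult_vec_in_Phi[OF y] x assms(2)
    by (simp add: Rel_pairing_iff herm_smult_right frob_divide frob_power divide_eq_eq)
  moreover have "herm q n x y = \<alpha> ^ i * \<alpha> ^ (j * q) \<longleftrightarrow> h \<in> I2 \<and> [h = i + j * q] (mod M)"
    using R
  proof (cases rule: Rel_cases)
    case scalar
    then show ?thesis using herm_smult_vec_self[OF x] index_classes_disjoint by auto
  next
    case pairing
    then show ?thesis by (simp add: alpha_power_eq_iff flip: power_add)
  next
    case orth
    then show ?thesis using index_classes_disjoint by auto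
  qed
  ultimately show ?thesis by simp
qed

lemma pcount_D_I1:
  assumes R: "Rel q \<alpha> n h x y" and "j \<in> I1"
  shows "int (pcount q \<alpha> n D j x y) = (if h = D then 1 else 0)"
proof -
  have x: "x \<in> Phi q n" and y: "y \<in> Phi q n" using Rel_Phi[OF R] by auto
  have "pcount q \<alpha> n D j x y = (if Rel q \<alpha> n D x y then 1 else 0)"
    using pcount_scalar_right[OF assms(2) y] smult_vec_in_Phi[OF y] x y ex_multiple_smult_left[of "1 / \<alpha> ^ j" y x]
    by (simp add: Rel_orth_iff herm_smult_right)
  with R show ?thesis
    by (cases rule: Rel_cases) (use x y in \<open>auto simp: Rel_orth_iff index_classes_disjoint\<close>)
qed

lemma norm_count_minus_tr_alpha_power:
  assumes n: "n \<ge> 4"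
  shows "int (norm_count (n - 2) (- tr (\<alpha> ^ a / \<alpha> ^ b)))
    = (if [a = b + t] (mod (q + 1)) then int (card (Phi q (n - 2) :: (nat \<Rightarrow> 'a) set)) + 1
       else int q ^ (2*n - 5) + (- int q) ^ (n - 3))"
proof (cases "[a = b + t] (mod (q + 1))")
  case True
  then have "tr (\<alpha> ^ a / \<alpha> ^ b) = 0" using tr_alpha_power_div_eq_0_iff by simp
  with True show ?thesis by (simp add: norm_count_0_eq)
next
  case False
  then have "- tr (\<alpha> ^ a / \<alpha> ^ b) \<noteq> 0" using tr_alpha_power_div_eq_0_iff by simp
  moreover have "n - 3 + 1 = n - 2" "2 * (n - 3) + 1 = 2 * n - 5" using n by auto
  ultimately show ?thesis
    using False norm_count_nonzero[OF minus_in_Fq[OF tr_in_Fq], of "\<alpha> ^ a / \<alpha> ^ b" "n - 3"] by simp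
qed

lemma pcount_I2_I2:
  assumes n: "n \<ge> 4" and R: "Rel q \<alpha> n h x y" and "i \<in> I2" "j \<in> I2"
  shows "(h \<in> I1 \<longrightarrow> int (pcount q \<alpha> n i j x y)
            = (if [q * (h + i) = j] (mod M) then int q ^ (2*n - 3) else 0)) \<and>
         (h \<in> I2 \<longrightarrow> int (pcount q \<alpha> n i j x y)
            = (if [i + j = h + t] (mod (q + 1)) then int (card (Phi q (n - 2) :: (nat \<Rightarrow> 'a) set)) + 1
               else int q ^ (2*n - 5) + (- int q) ^ (n - 3))) \<and>
         (h = D \<longrightarrow> int (pcount q \<alpha> n i j x y) = int q ^ (2*n - 5))"
proof -
  have x: "x \<in> Phi q n" and y: "y \<in> Phi q n" using Rel_Phi[OF R] by auto
  have p: "pcount q \<alpha> n i j x y = card {z \<in> Phi q n. herm q n x z = \<alpha> ^ i \<and> herm q n z y = \<alpha> ^ j}"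
    unfolding pcount_def using x y assms(3,4) by (auto simp: Rel_pairing_iff intro!: arg_cong[where f = card])
  from R show ?thesis
  proof (cases rule: Rel_cases)
    case scalar
    have "herm q n z y = frob (\<alpha> ^ h * herm q n x z)" for z
      using herm_commute[of n x z] by (simp add: scalar(2) herm_smult_right frob_mult)
    then have "{z \<in> Phi q n. herm q n x z = \<alpha> ^ i \<and> herm q n z y = \<alpha> ^ j}
        = (if [q * (h + i) = j] (mod M) then {z \<in> Phi q n. herm q n x z = \<alpha> ^ i} else {})"
      by (auto simp: frob_power alpha_power_eq_iff mult.commute simp flip: power_add)
    moreover have "2 * (n - 2) + 1 = 2 * n - 3" using n by simp
    ultimately have "pcount q \<alpha> n i j x y = (if [q * (h + i) = j] (mod M) then q ^ (2*n - 3) else 0)"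
      using p card_Phi_herm[OF x, of "n - 2" "\<alpha> ^ i"] n by simp
    then have "int (pcount q \<alpha> n i j x y) = (if [q * (h + i) = j] (mod M) then int q ^ (2*n - 3) else 0)"
      by simp
    with scalar(1) index_classes_disjoint(1) show ?thesis by blast
  next
    case pairing
    have "int (pcount q \<alpha> n i j x y)
        = (if [i + j = h + t] (mod (q + 1)) then int (card (Phi q (n - 2) :: (nat \<Rightarrow> 'a) set)) + 1
           else int q ^ (2*n - 5) + (- int q) ^ (n - 3))"
      using p card_Phi_herm_herm_nonorthogonal[OF x y pairing(2), where k = "n - 2"] n
        norm_count_minus_tr_alpha_power[OF n, of "i + j" h] by (simp add: power_add)
    with pairing(1) index_classes_disjoint(2) show ?thesis by blast
  next
    case orth
    have "2 * (n - 4) + 3 = 2 * n - 5" using n by simp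
    then have "int (pcount q \<alpha> n i j x y) = int q ^ (2*n - 5)"
      using p card_Phi_herm_herm_orthogonal[OF x y orth(2,3), of "n - 4"] n by simp
    with orth(1) index_classes_disjoint(3) show ?thesis by blast
  qed
qed

lemma pcount_I2_D:
  assumes n: "n \<ge> 4" and R: "Rel q \<alpha> n h x y" and "i \<in> I2"
  shows "(h \<in> I1 \<longrightarrow> int (pcount q \<alpha> n i D x y) = 0) \<and>
         (h \<in> I2 \<longrightarrow> int (pcount q \<alpha> n i D x y) = int (card (Phi q (n - 2) :: (nat \<Rightarrow> 'a) set))) \<and>
         (h = D \<longrightarrow> int (pcount q \<alpha> n i D x y) = int q ^ (2*n - 5))"
proof -
  have x: "x \<in> Phi q n" and y: "y \<in> Phi q n" using Rel_Phi[OF R] by auto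
  let ?S = "{z \<in> Phi q n. herm q n x z = \<alpha> ^ i \<and> herm q n z y = 0}"
  have p: "pcount q \<alpha> n i D x y
      = card {z \<in> Phi q n. herm q n x z = \<alpha> ^ i \<and> herm q n z y = 0 \<and> (\<nexists>c. y = smult_vec c z)}"
    unfolding pcount_def using x y assms(3)
    by (auto simp: Rel_pairing_iff Rel_orth_iff intro!: arg_cong[where f = card])
  from R show ?thesis
  proof (cases rule: Rel_cases)
    case scalar
    have "herm q n z y = frob (\<alpha> ^ h * herm q n x z)" for z
      using herm_commute[of n x z] by (simp add: scalar(2) herm_smult_right frob_mult)
    then have "{z \<in> Phi q n. herm q n x z = \<alpha> ^ i \<and> herm q n z y = 0 \<and> (\<nexists>c. y = smult_vec c z)} = {}"
      by auto
    with p have "int (pcount q \<alpha> n i D x y) = 0" by (metis card.empty of_nat_0)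
    with scalar(1) index_classes_disjoint(1) show ?thesis by blast
  next
    case pairing
    have "card ?S = card (Phi q (n - 2) :: (nat \<Rightarrow> 'a) set) + 1"
      using card_Phi_herm_herm_nonorthogonal[OF x y pairing(2), where k = "n - 2", of "\<alpha> ^ i" 0] n
      by (simp add: norm_count_0_eq)
    then have "int (pcount q \<alpha> n i D x y) = int (card (Phi q (n - 2) :: (nat \<Rightarrow> 'a) set))"
      using p card_Phi_nonorthogonal_drop_multiple_right[OF y pairing(2)] by simp
    with pairing(1) index_classes_disjoint(2) show ?thesis by blast
  next
    case orth
    have "\<nexists>c. y = smult_vec c z" if "z \<in> ?S" for z
      using that y orth(2) ex_multiple_commute[of y z] by (auto simp: Phi_iff herm_smult_right)
    then have "{z \<in> Phi q n. herm q n x z = \<alpha> ^ i \<and> herm q n z y = 0 \<and> (\<nexists>c. y = smult_vec c z)} = ?S"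
      by blast
    then have "pcount q \<alpha> n i D x y = card ?S" using p by simp
    moreover have "2 * (n - 4) + 3 = 2 * n - 5" using n by simp
    ultimately have "int (pcount q \<alpha> n i D x y) = int q ^ (2*n - 5)"
      using card_Phi_herm_herm_orthogonal[OF x y orth(2,3), of "n - 4"] n by simp
    with orth(1) index_classes_disjoint(3) show ?thesis by blast
  qed
qed

lemma pcount_D_I2:
  assumes n: "n \<ge> 4" and R: "Rel q \<alpha> n h x y" and "j \<in> I2"
  shows "(h \<in> I1 \<longrightarrow> int (pcount q \<alpha> n D j x y) = 0) \<and>
         (h \<in> I2 \<longrightarrow> int (pcount q \<alpha> n D j x y) = int (card (Phi q (n - 2) :: (nat \<Rightarrow> 'a) set))) \<and>
         (h = D \<longrightarrow> int (pcount q \<alpha> n D j x y) = int q ^ (2*n - 5))"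
proof -
  have x: "x \<in> Phi q n" and y: "y \<in> Phi q n" using Rel_Phi[OF R] by auto
  let ?S = "{z \<in> Phi q n. herm q n x z = 0 \<and> herm q n z y = \<alpha> ^ j}"
  have p: "pcount q \<alpha> n D j x y
      = card {z \<in> Phi q n. herm q n x z = 0 \<and> (\<nexists>c. z = smult_vec c x) \<and> herm q n z y = \<alpha> ^ j}"
    unfolding pcount_def using x y assms(3)
    by (auto simp: Rel_pairing_iff Rel_orth_iff intro!: arg_cong[where f = card])
  from R show ?thesis
  proof (cases rule: Rel_cases)
    case scalar
    have "herm q n z y = 0" if "herm q n x z = 0" for z
      using that herm_eq_0_commute[of n x z] by (simp add: scalar(2) herm_smult_right)
    then have "{z \<in> Phi q n. herm q n x z = 0 \<and> (\<nexists>c. z = smult_vec c x) \<and> herm q n z y = \<alpha> ^ j} = {}"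
      by auto
    with p have "int (pcount q \<alpha> n D j x y) = 0" by (metis card.empty of_nat_0)
    with scalar(1) index_classes_disjoint(1) show ?thesis by blast
  next
    case pairing
    have "card ?S = card (Phi q (n - 2) :: (nat \<Rightarrow> 'a) set) + 1"
      using card_Phi_herm_herm_nonorthogonal[OF x y pairing(2), where k = "n - 2", of 0 "\<alpha> ^ j"] n
      by (simp add: norm_count_0_eq)
    then have "int (pcount q \<alpha> n D j x y) = int (card (Phi q (n - 2) :: (nat \<Rightarrow> 'a) set))"
      using p card_Phi_nonorthogonal_drop_multiple_left[OF x pairing(2)] by simp
    with pairing(1) index_classes_disjoint(2) show ?thesis by blast
  next
    case orth
    have "\<nexists>c. z = smult_vec c x" if "z \<in> ?S" for z
      using that orth(2) by (auto simp: herm_smult_left)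
    then have "{z \<in> Phi q n. herm q n x z = 0 \<and> (\<nexists>c. z = smult_vec c x) \<and> herm q n z y = \<alpha> ^ j} = ?S"
      by blast
    then have "pcount q \<alpha> n D j x y = card ?S" using p by simp
    moreover have "2 * (n - 4) + 3 = 2 * n - 5" using n by simp
    ultimately have "int (pcount q \<alpha> n D j x y) = int q ^ (2*n - 5)"
      using card_Phi_herm_herm_orthogonal[OF x y orth(2,3), of "n - 4"] n by simp
    with orth(1) index_classes_disjoint(3) show ?thesis by blast
  qed
qed

lemma pcount_D_D_eq:
  assumes x: "x \<in> Phi q n" and y: "y \<in> Phi q n"
  shows "pcount q \<alpha> n D D x y = card ({z \<in> Phi q n. herm q n x z = 0 \<and> herm q n z y = 0}
    - nonzero_multiples x - nonzero_multiples y)"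
proof -
  have "(\<exists>c. z = smult_vec c x) \<longleftrightarrow> z \<in> nonzero_multiples x"
    and "(\<exists>c. y = smult_vec c z) \<longleftrightarrow> z \<in> nonzero_multiples y" if "z \<in> Phi q n" for z
    using that x y ex_multiple_commute[of y z] in_nonzero_multiples_iff by (auto simp: Phi_iff)
  then show ?thesis
    using x y by (auto simp: pcount_def Rel_orth_iff intro!: arg_cong[where f = card])
qed

lemma pcount_D_D:
  assumes n: "n \<ge> 4" and R: "Rel q \<alpha> n h x y"
  shows "(h \<in> I1 \<longrightarrow> int (pcount q \<alpha> n D D x y)
            = int q ^ 2 * int (card (Phi q (n - 2) :: (nat \<Rightarrow> 'a) set))) \<and>
         (h \<in> I2 \<longrightarrow> int (pcount q \<alpha> n D D x y) = int (card (Phi q (n - 2) :: (nat \<Rightarrow> 'a) set))) \<and>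
         (h = D \<longrightarrow> int (pcount q \<alpha> n D D x y)
            = (int q ^ 2 - 1) ^ 2 + int q ^ 4 * int (card (Phi q (n - 4) :: (nat \<Rightarrow> 'a) set)))"
proof -
  have x: "x \<in> Phi q n" and y: "y \<in> Phi q n" using Rel_Phi[OF R] by auto
  let ?S = "{z \<in> Phi q n. herm q n x z = 0 \<and> herm q n z y = 0}"
  from R show ?thesis
  proof (cases rule: Rel_cases)
    case scalar
    have "?S = {z \<in> Phi q n. herm q n x z = 0}" "nonzero_multiples y = nonzero_multiples x"
      using herm_eq_0_commute[of n x] by (auto simp: scalar(2) herm_smult_right nonzero_multiples_smult_vec)
    then have "pcount q \<alpha> n D D x y = q^2 * card (Phi q (n - 2) :: (nat \<Rightarrow> 'a) set)"
      using pcount_D_D_eq[OF x y] card_Phi_orthogonal_drop_multiples[OF x, of "n - 2"] n by simp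
    then have "int (pcount q \<alpha> n D D x y) = int q ^ 2 * int (card (Phi q (n - 2) :: (nat \<Rightarrow> 'a) set))"
      by simp
    with scalar(1) index_classes_disjoint(1) show ?thesis by blast
  next
    case pairing
    have "z \<notin> nonzero_multiples x" "z \<notin> nonzero_multiples y" if "z \<in> ?S" for z
      using that pairing(2) by (auto simp: nonzero_multiples_def herm_smult_left herm_smult_right)
    then have "?S - nonzero_multiples x - nonzero_multiples y = ?S" by blast
    then have "int (pcount q \<alpha> n D D x y) = int (card (Phi q (n - 2) :: (nat \<Rightarrow> 'a) set))"
      using pcount_D_D_eq[OF x y] card_Phi_herm_herm_nonorthogonal[OF x y pairing(2), where k = "n - 2", of 0 0] n
      by (simp add: norm_count_0_eq)
    with pairing(1) index_classes_disjoint(2) show ?thesis by blast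
  next
    case orth
    have "int (pcount q \<alpha> n D D x y) + 2 * (int q ^ 2 - 1) + 1
        = int q ^ 4 * (int (card (Phi q (n - 4) :: (nat \<Rightarrow> 'a) set)) + 1)"
      using arg_cong[OF card_Phi_orthogonal_pair_drop_multiples[OF x y orth(2,3), of "n - 4"], of int]
        pcount_D_D_eq[OF x y] n q_square_ge_4 by (simp add: of_nat_diff algebra_simps)
    then have "int (pcount q \<alpha> n D D x y)
        = (int q ^ 2 - 1) ^ 2 + int q ^ 4 * int (card (Phi q (n - 4) :: (nat \<Rightarrow> 'a) set))"
      by (simp add: power2_eq_square power4_eq_xxxx algebra_simps)
    with orth(1) index_classes_disjoint(3) show ?thesis by blast
  qed
qed

lemma intersection_numbers:
  assumes n: "n \<ge> 4" and R: "Rel q \<alpha> n h x y"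
  shows "let p = int (pcount q \<alpha> n i j x y) in
      (i \<in> I1 \<and> j \<in> I1 \<longrightarrow>
         p = (if h \<in> I1 \<and> [h = i + j] (mod M) then 1 else 0)) \<and>
      (i \<in> I1 \<and> j \<in> I2 \<longrightarrow>
         p = (if h \<in> I2 \<and> [h + i = j] (mod M) then 1 else 0)) \<and>
      (i \<in> I1 \<and> j = D \<longrightarrow>
         p = (if h = D then 1 else 0)) \<and>
      (i \<in> I2 \<and> j \<in> I1 \<longrightarrow>
         p = (if h \<in> I2 \<and> [h = i + j * q] (mod M) then 1 else 0)) \<and>
      (i \<in> I2 \<and> j \<in> I2 \<longrightarrow>
         (h \<in> I1 \<longrightarrow> p = (if [q * (h + i) = j] (mod M) then int q ^ (2*n - 3) else 0)) \<and>
         (h \<in> I2 \<longrightarrow> p = (if [i + j = h + t] (mod (q + 1))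
                          then int (card (Phi q (n - 2) :: (nat \<Rightarrow> 'a) set)) + 1
                          else int q ^ (2*n - 5) + (- int q) ^ (n - 3))) \<and>
         (h = D \<longrightarrow> p = int q ^ (2*n - 5))) \<and>
      (i \<in> I2 \<and> j = D \<longrightarrow>
         (h \<in> I1 \<longrightarrow> p = 0) \<and> (h \<in> I2 \<longrightarrow> p = int (card (Phi q (n - 2) :: (nat \<Rightarrow> 'a) set))) \<and>
         (h = D \<longrightarrow> p = int q ^ (2*n - 5))) \<and>
      (i = D \<and> j \<in> I1 \<longrightarrow>
         p = (if h = D then 1 else 0)) \<and>
      (i = D \<and> j \<in> I2 \<longrightarrow>
         (h \<in> I1 \<longrightarrow> p = 0) \<and> (h \<in> I2 \<longrightarrow> p = int (card (Phi q (n - 2) :: (nat \<Rightarrow> 'a) set))) \<and>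
         (h = D \<longrightarrow> p = int q ^ (2*n - 5))) \<and>
      (i = D \<and> j = D \<longrightarrow>
         (h \<in> I1 \<longrightarrow> p = int q ^ 2 * int (card (Phi q (n - 2) :: (nat \<Rightarrow> 'a) set))) \<and>
         (h \<in> I2 \<longrightarrow> p = int (card (Phi q (n - 2) :: (nat \<Rightarrow> 'a) set))) \<and>
         (h = D \<longrightarrow> p = (int q ^ 2 - 1) ^ 2 + int q ^ 4 * int (card (Phi q (n - 4) :: (nat \<Rightarrow> 'a) set))))"
  unfolding Let_def
  apply (intro conjI)
  subgoal using pcount_I1_I1[OF R] by blast
  subgoal using pcount_I1_I2[OF R] by blast
  subgoal using pcount_I1_D[OF R] by blast
  subgoal using pcount_I2_I1[OF R] by blast
  subgoal using pcount_I2_I2[OF n R] by blast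
  subgoal using pcount_I2_D[OF n R] by blast
  subgoal using pcount_D_I1[OF R] by blast
  subgoal using pcount_D_I2[OF n R] by blast
  subgoal using pcount_D_D[OF n R] by blast
  done

end

theorem mainTheorem14:
  fixes q n :: nat and \<alpha> :: "'a::{field,finite}"
  assumes "primepow q"
    and "CARD('a) = q^2"
    and "n \<ge> 4"
    and "primitive_elem \<alpha>"
  defines "D \<equiv> 2*q^2 - 2"
    and "I1 \<equiv> {0..q^2 - 2}"
    and "I2 \<equiv> {q^2 - 1..2*q^2 - 3}"
    and "s \<equiv> card (Phi q (n - 2) :: (nat \<Rightarrow> 'a) set)"
    and "t \<equiv> (if even q then 0 else (q + 1) div 2)"
    and "M \<equiv> q^2 - 1"
  shows "\<forall>h i j x y. h \<le> D \<longrightarrow> i \<le> D \<longrightarrow> j \<le> D \<longrightarrow> Rel q \<alpha> n h x y \<longrightarrow>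
     (let p = int (pcount q \<alpha> n i j x y) in
      (i \<in> I1 \<and> j \<in> I1 \<longrightarrow>
         p = (if h \<in> I1 \<and> [h = i + j] (mod M) then 1 else 0)) \<and>
      (i \<in> I1 \<and> j \<in> I2 \<longrightarrow>
         p = (if h \<in> I2 \<and> [h + i = j] (mod M) then 1 else 0)) \<and>
      (i \<in> I1 \<and> j = D \<longrightarrow>
         p = (if h = D then 1 else 0)) \<and>
      (i \<in> I2 \<and> j \<in> I1 \<longrightarrow>
         p = (if h \<in> I2 \<and> [h = i + j * q] (mod M) then 1 else 0)) \<and>
      (i \<in> I2 \<and> j \<in> I2 \<longrightarrow>
         (h \<in> I1 \<longrightarrow> p = (if [q * (h + i) = j] (mod M) then int q ^ (2*n - 3) else 0)) \<and>
         (h \<in> I2 \<longrightarrow> p = (if [i + j = h + t] (mod (q + 1)) then int s + 1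
                          else int q ^ (2*n - 5) + (- int q) ^ (n - 3))) \<and>
         (h = D \<longrightarrow> p = int q ^ (2*n - 5))) \<and>
      (i \<in> I2 \<and> j = D \<longrightarrow>
         (h \<in> I1 \<longrightarrow> p = 0) \<and> (h \<in> I2 \<longrightarrow> p = int s) \<and> (h = D \<longrightarrow> p = int q ^ (2*n - 5))) \<and>
      (i = D \<and> j \<in> I1 \<longrightarrow>
         p = (if h = D then 1 else 0)) \<and>
      (i = D \<and> j \<in> I2 \<longrightarrow>
         (h \<in> I1 \<longrightarrow> p = 0) \<and> (h \<in> I2 \<longrightarrow> p = int s) \<and> (h = D \<longrightarrow> p = int q ^ (2*n - 5))) \<and>
      (i = D \<and> j = D \<longrightarrow>
         (h \<in> I1 \<longrightarrow> p = int q ^ 2 * int s) \<and> (h \<in> I2 \<longrightarrow> p = int s) \<and>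
         (h = D \<longrightarrow> p = (int q ^ 2 - 1) ^ 2 + int q ^ 4 * int (card (Phi q (n - 4) :: (nat \<Rightarrow> 'a) set)))))"
proof -
  interpret S: unitary_scheme q "TYPE('a)" \<alpha>
    using assms(1,2,4) by unfold_locales
  show ?thesis
    unfolding D_def I1_def I2_def s_def t_def M_def
    by (intro allI impI) (erule S.intersection_numbers[OF assms(3)])
qed

end
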